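(* Let $N,m\ge1$ and for $p=1,\dots,m$ let $d_1^p,d_2^p\ge1$. Let $\kappa_1,\kappa_2\ge0$, and for $1\le j\le N$, $1\le p\le m$ let $B_j^p\in\mathbb C^{d_1^p\times d_2^p\times d_1^p\times d_2^p}$ satisfy $[B_j^p]_{\alpha_1\beta_1\alpha_2\beta_2}=-\overline{[B_j^p]_{\alpha_2\beta_2\alpha_1\beta_1}}$. Define the rank-$4m$ tensor $A_j$ by $$[A_j]_{\alpha_1\cdots\alpha_{2m}\beta_1\cdots\beta_{2m}}=\sum_{k=1}^m[B_j^k]_{\alpha_{2k-1}\alpha_{2k}\beta_{2k-1}\beta_{2k}}\prod_{\ell\ne k}\delta_{\alpha_{2\ell-1}\beta_{2\ell-1}}\delta_{\alpha_{2\ell}\beta_{2\ell}},$$ and consider the Lohe tensor model for rank-$2m$ tensors in $\mathbb C^{d_1^1\times d_2^1\times\cdots\times d_1^m\times d_2^m}$ with couplings $\kappa_{i_*}=\kappa_1$ if $i_*\in\Lambda_1$, $\kappa_{i_*}=\kappa_2$ if $i_*\in\Lambda_2$, and $\kappa_{i_*}=0$ otherwise, where $\Lambda_1$ (resp. $\Lambda_2$) is the set of $i_*\in\{0,1\}^{2m}$ having exactly one zero coordinate, located at an odd position $2q-1$ (resp. an even position $2q$), $1\le q\le m$. Then: (1) If $\{U_i^p\}$ is a solution of the multiple matrix model, then $T_i:=U_i^1\otimes U_i^2\otimes\cdots\otimes U_i^m$ is a (quadratically separable) solution of this Lohe tensor model with free flow tensors $A_i$. (2) If $\{T_i\}$ solves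 this Lohe tensor model with free flow tensors $A_i$ and initial data $T_i(0)=U_i^{1,0}\otimes\cdots\otimes U_i^{m,0}$, where $U_i^{p,0}\in\mathbb C^{d_1^p\times d_2^p}$ have unit Frobenius norm, then there exist matrices $U_i^p(t)$ of unit Frobenius norm with $T_i(t)=U_i^1(t)\otimes\cdots\otimes U_i^m(t)$ for $t>0$, where $\{U_i^p\}$ is the solution of the multiple matrix model with $U_i^p(0)=U_i^{p,0}$.
   Context: $\langle A,B\rangle_F=\mathrm{tr}(A^\dagger B)$, $\|A\|_F=\sqrt{\langle A,A\rangle_F}$; $[U^1\otimes\cdots\otimes U^m]_{\alpha_1\beta_1\cdots\alpha_m\beta_m}=[U^1]_{\alpha_1\beta_1}\cdots[U^m]_{\alpha_m\beta_m}$; repeated indices are summed. Multiple matrix model, for $U_j^p\in\mathbb C^{d_1^p\times d_2^p}$: $\dot U_j^p=B_j^pU_j^p+\frac{\kappa_1}{N}\sum_{k=1}^N\Big(\prod_{\ell\ne p}\langle U_j^\ell,U_k^\ell\rangle_F\,U_k^p(U_j^p)^\dagger U_j^p-\prod_{\ell\ne p}\langle U_k^\ell,U_j^\ell\rangle_F\,U_j^p(U_k^p)^\dagger U_j^p\Big)+\frac{\kappa_2}{N}\sum_{k=1}^N\Big(\prod_{\ell\ne p}\langle U_j^\ell,U_k^\ell\rangle_F\,U_j^p(U_j^p)^\dagger U_k^p-\prod_{\ell\ne p}\langle U_k^\ell,U_j^\ell\rangle_F\,U_j^p(U_k^p)^\dagger U_j^p\Big)$, with $[B_j^pU_j^p]_{\alpha\beta}=[B_j^p]_{\alpha\beta\gamma\delta}[U_j^p]_{\gamma\delta}$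 and products over $\ell\in\{1,\dots,m\}\setminus\{p\}$. Lohe tensor model for rank-$r$ tensors $T_j$: for $i_*\in\{0,1\}^r$ write $\alpha_{*i_*}=(\alpha_{1i_1},\dots,\alpha_{ri_r})$, $\alpha_{*(1-i_* )}=(\alpha_{1(1-i_1)},\dots)$; with $T_c=\frac1N\sum_kT_k$ and rank-$2r$ tensors $A_j$ satisfying $\overline{[A_j]_{\alpha_{*0}\alpha_{*1}}}=-[A_j]_{\alpha_{*1}\alpha_{*0}}$, $\frac{d}{dt}[T_j]_{\alpha_{*0}}=[A_j]_{\alpha_{*0}\alpha_{*1}}[T_j]_{\alpha_{*1}}+\sum_{i_*}\kappa_{i_*}\big([T_c]_{\alpha_{*i_*}}\overline{[T_j]_{\alpha_{*1}}}[T_j]_{\alpha_{*(1-i_* )}}-[T_j]_{\alpha_{*i_*}}\overline{[T_c]_{\alpha_{*1}}}[T_j]_{\alpha_{*(1-i_* )}}\big)$, summed over $\alpha_{*1}$. *)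

theory Defs
  imports "HOL-Analysis.Analysis"
begin

text \<open>Conventions: agents j are 0-based (j < N), factors p are 0-based (p < m).
 A matrix in C^{d1 x d2} is a function nat => nat => complex, only entries with
 row < d1, column < d2 matter. A rank-r tensor is a function nat list => complex,
 only index lists in idxs dims matter.\<close>

type_synonym cmat = "nat \<Rightarrow> nat \<Rightarrow> complex"

definition frob_inner :: "nat \<Rightarrow> nat \<Rightarrow> cmat \<Rightarrow> cmat \<Rightarrow> complex" where
  "frob_inner d1 d2 X Y = (\<Sum>a<d1. \<Sum>b<d2. cnj (X a b) * Y a b)"

definition frob_norm :: "nat \<Rightarrow> nat \<Rightarrow> cmat \<Rightarrow> real" where
  "frob_norm d1 d2 X = sqrt (\<Sum>a<d1. \<Sum>b<d2. (cmod (X a b))^2)"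

definition mat_mult :: "nat \<Rightarrow> cmat \<Rightarrow> cmat \<Rightarrow> cmat" where
  "mat_mult n X Y = (\<lambda>a c. \<Sum>b<n. X a b * Y b c)"

definition adj :: "cmat \<Rightarrow> cmat" where
  "adj X = (\<lambda>a b. cnj (X b a))"

definition apply4 :: "nat \<Rightarrow> nat \<Rightarrow> (nat \<Rightarrow> nat \<Rightarrow> nat \<Rightarrow> nat \<Rightarrow> complex) \<Rightarrow> cmat \<Rightarrow> cmat" where
  "apply4 d1 d2 B X = (\<lambda>a b. \<Sum>c<d1. \<Sum>d<d2. B a b c d * X c d)"

definition mm_rhs ::
  "nat \<Rightarrow> nat \<Rightarrow> (nat \<Rightarrow> nat) \<Rightarrow> (nat \<Rightarrow> nat) \<Rightarrow> real \<Rightarrow> real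
   \<Rightarrow> (nat \<Rightarrow> nat \<Rightarrow> nat \<Rightarrow> nat \<Rightarrow> nat \<Rightarrow> nat \<Rightarrow> complex)
   \<Rightarrow> (nat \<Rightarrow> nat \<Rightarrow> cmat) \<Rightarrow> nat \<Rightarrow> nat \<Rightarrow> cmat" where
  "mm_rhs N m d1 d2 \<kappa>1 \<kappa>2 B U j p =
    (let P = (\<lambda>j k. \<Prod>l\<in>{..<m} - {p}. frob_inner (d1 l) (d2 l) (U j l) (U k l));
         mm = (\<lambda>X Y Z. mat_mult (d1 p) (mat_mult (d2 p) X (adj Y)) Z)
     in (\<lambda>a b. apply4 (d1 p) (d2 p) (B j p) (U j p) a b
        + complex_of_real (\<kappa>1 / real N) *
            (\<Sum>k<N. P j k * mm (U k p) (U j p) (U j p) a b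
                   - P k j * mm (U j p) (U k p) (U j p) a b)
        + complex_of_real (\<kappa>2 / real N) *
            (\<Sum>k<N. P j k * mm (U j p) (U j p) (U k p) a b
                   - P k j * mm (U j p) (U k p) (U j p) a b)))"

definition mm_solution ::
  "nat \<Rightarrow> nat \<Rightarrow> (nat \<Rightarrow> nat) \<Rightarrow> (nat \<Rightarrow> nat) \<Rightarrow> real \<Rightarrow> real
   \<Rightarrow> (nat \<Rightarrow> nat \<Rightarrow> nat \<Rightarrow> nat \<Rightarrow> nat \<Rightarrow> nat \<Rightarrow> complex)
   \<Rightarrow> (nat \<Rightarrow> nat \<Rightarrow> real \<Rightarrow> cmat) \<Rightarrow> bool" where
  "mm_solution N m d1 d2 \<kappa>1 \<kappa>2 B U \<longleftrightarrow>
    (\<forall>t\<ge>0. \<forall>j<N. \<forall>p<m. \<forall>a<d1 p. \<forall>b<d2 p.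
       ((\<lambda>s. U j p s a b) has_vector_derivative
          mm_rhs N m d1 d2 \<kappa>1 \<kappa>2 B (\<lambda>j' p'. U j' p' t) j p a b) (at t within {0..}))"

definition idxs :: "nat list \<Rightarrow> nat list set" where
  "idxs dims = {as. length as = length dims \<and> (\<forall>k<length dims. as ! k < dims ! k)}"

definition tdims :: "nat \<Rightarrow> (nat \<Rightarrow> nat) \<Rightarrow> (nat \<Rightarrow> nat) \<Rightarrow> nat list" where
  "tdims m d1 d2 = concat (map (\<lambda>p. [d1 p, d2 p]) [0..<m])"

text \<open>alpha_{*i*}: coordinate k taken from a1 if i!k (i.e. i_k = 1), else from a0.\<close>
definition sel :: "bool list \<Rightarrow> nat list \<Rightarrow> nat list \<Rightarrow> nat list" where
  "sel i a0 a1 = map (\<lambda>k. if i ! k then a1 ! k else a0 ! k) [0..<length i]"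

definition onezero :: "nat \<Rightarrow> nat \<Rightarrow> bool list" where
  "onezero n q = map (\<lambda>k. k \<noteq> q) [0..<n]"

text \<open>Lambda_1: single zero at odd 1-based position 2q-1 (0-based 2q);
      Lambda_2: single zero at even 1-based position 2q (0-based 2q+1).\<close>
definition Lambda1 :: "nat \<Rightarrow> bool list set" where
  "Lambda1 m = {onezero (2*m) (2*q) | q. q < m}"

definition Lambda2 :: "nat \<Rightarrow> bool list set" where
  "Lambda2 m = {onezero (2*m) (2*q+1) | q. q < m}"

definition kappa_coupling :: "nat \<Rightarrow> real \<Rightarrow> real \<Rightarrow> bool list \<Rightarrow> real" where
  "kappa_coupling m \<kappa>1 \<kappa>2 i =
     (if i \<in> Lambda1 m then \<kappa>1 else if i \<in> Lambda2 m then \<kappa>2 else 0)"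

definition free_flow ::
  "nat \<Rightarrow> (nat \<Rightarrow> nat \<Rightarrow> nat \<Rightarrow> nat \<Rightarrow> nat \<Rightarrow> nat \<Rightarrow> complex) \<Rightarrow> nat
   \<Rightarrow> nat list \<Rightarrow> nat list \<Rightarrow> complex" where
  "free_flow m B j as bs =
    (\<Sum>k<m. B j k (as!(2*k)) (as!(2*k+1)) (bs!(2*k)) (bs!(2*k+1)) *
       (\<Prod>l\<in>{..<m} - {k}.
          (if as!(2*l) = bs!(2*l) then 1 else 0) * (if as!(2*l+1) = bs!(2*l+1) then 1 else 0)))"

definition lohe_rhs ::
  "nat list \<Rightarrow> (bool list \<Rightarrow> real) \<Rightarrow> (nat list \<Rightarrow> nat list \<Rightarrow> complex)
   \<Rightarrow> (nat list \<Rightarrow> complex) \<Rightarrow> (nat list \<Rightarrow> complex) \<Rightarrow> nat list \<Rightarrow> complex" where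
  "lohe_rhs dims \<kappa> A Tj Tc a0 =
     (\<Sum>a1\<in>idxs dims. A a0 a1 * Tj a1)
     + (\<Sum>i\<in>{i. length i = length dims}. complex_of_real (\<kappa> i) *
          (\<Sum>a1\<in>idxs dims.
             Tc (sel i a0 a1) * cnj (Tj a1) * Tj (sel (map Not i) a0 a1)
             - Tj (sel i a0 a1) * cnj (Tc a1) * Tj (sel (map Not i) a0 a1)))"

definition lohe_solution ::
  "nat \<Rightarrow> nat list \<Rightarrow> (bool list \<Rightarrow> real) \<Rightarrow> (nat \<Rightarrow> nat list \<Rightarrow> nat list \<Rightarrow> complex)
   \<Rightarrow> (nat \<Rightarrow> real \<Rightarrow> nat list \<Rightarrow> complex) \<Rightarrow> bool" where
  "lohe_solution N dims \<kappa> A T \<longleftrightarrow>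
    (\<forall>t\<ge>0. \<forall>j<N. \<forall>a0\<in>idxs dims.
       ((\<lambda>s. T j s a0) has_vector_derivative
          lohe_rhs dims \<kappa> (A j) (T j t) (\<lambda>a. (\<Sum>k<N. T k t a) / of_nat N) a0)
        (at t within {0..}))"

definition mtensor :: "nat \<Rightarrow> (nat \<Rightarrow> cmat) \<Rightarrow> nat list \<Rightarrow> complex" where
  "mtensor m V as = (\<Prod>p<m. V p (as!(2*p)) (as!(2*p+1)))"

end

theory Submission
  imports Defs
begin

text \<open>With the couplings supported on the patterns having a single zero, the Lohe interaction
  term for \<open>T\<^sub>j\<close> becomes \<open>\<Sum>\<^sub>r \<kappa>\<^sub>r \<Sum>\<^sub>c H\<^sub>r(\<alpha>\<^sub>r, c) T\<^sub>j(\<alpha>[r:=c])\<close>: it is linear in \<open>T\<^sub>j\<close> once the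
  coupling matrices \<open>H\<^sub>r\<close>, built from \<open>T\<^sub>j\<close> and the centroid, are fixed. For product tensors,
  \<open>H\<^sub>r\<close> factors into Frobenius inner products of the other factors times a partial contraction
  of the factor carrying index \<open>r\<close>, and the product rule turns the multiple matrix model into
  the Lohe model.

  Conversely, freeze the coupling matrices of a given Lohe solution \<open>T\<close>. The resulting linear,
  time-dependent system for the factors has a solution \<open>V\<close> starting at \<open>U\<^sup>0\<close> (Picard iteration).
  The product of the \<open>V\<close>'s satisfies the same linear equation as \<open>T\<close>, so it equals \<open>T\<close>
  (Gronwall); hence the frozen coupling matrices are those of \<open>V\<close> itself, and \<open>V\<close> solves the
  multiple matrix model. Its Frobenius norms are conserved because its generator is
  skew-Hermitian.\<close>

section \<open>Linear systems of differential equations\<close>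

primrec picard_iter ::
  "'i set \<Rightarrow> (real \<Rightarrow> 'i \<Rightarrow> 'i \<Rightarrow> complex) \<Rightarrow> ('i \<Rightarrow> complex) \<Rightarrow> nat \<Rightarrow> real \<Rightarrow> 'i \<Rightarrow> complex" where
  "picard_iter I M x0 0 t i = x0 i"
| "picard_iter I M x0 (Suc n) t i =
     x0 i + integral {0..t} (\<lambda>s. \<Sum>k\<in>I. M s i k * picard_iter I M x0 n s k)"

definition picard_limit ::
  "'i set \<Rightarrow> (real \<Rightarrow> 'i \<Rightarrow> 'i \<Rightarrow> complex) \<Rightarrow> ('i \<Rightarrow> complex) \<Rightarrow> real \<Rightarrow> 'i \<Rightarrow> complex" where
  "picard_limit I M x0 t i =
     x0 i + (\<Sum>n. picard_iter I M x0 (Suc n) t i - picard_iter I M x0 n t i)"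

lemma continuous_on_picard_iter:
  assumes "finite I" "\<And>i k. continuous_on {0..\<tau>} (\<lambda>t. M t i k)"
  shows "continuous_on {0..\<tau>} (\<lambda>t. picard_iter I M x0 n t i)"
proof (induction n arbitrary: i)
  case 0 then show ?case by simp
next
  case (Suc n)
  have "continuous_on {0..\<tau>} (\<lambda>s. \<Sum>k\<in>I. M s i k * picard_iter I M x0 n s k)"
    using Suc assms by (intro continuous_intros) auto
  then have "continuous_on {0..\<tau>}
      (\<lambda>t. integral {0..t} (\<lambda>s. \<Sum>k\<in>I. M s i k * picard_iter I M x0 n s k))"
    by (intro indefinite_integral_continuous_1 integrable_continuous_real)
  then show ?case by (simp add: continuous_intros)
qed

lemma uniform_limit_sum:
  fixes f :: "'k \<Rightarrow> nat \<Rightarrow> 'a::topological_space \<Rightarrow> 'b::real_normed_vector"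
  assumes "finite I" "\<And>k. k \<in> I \<Longrightarrow> uniform_limit S (f k) (g k) F"
  shows "uniform_limit S (\<lambda>n s. \<Sum>k\<in>I. f k n s) (\<lambda>s. \<Sum>k\<in>I. g k s) F"
  using assms by (induction I rule: finite_induct) (simp_all add: uniform_limit_const uniform_limit_add)

lemma has_integral_power_Icc0:
  assumes "0 \<le> t"
  shows "((\<lambda>s::real. s^n) has_integral t^(Suc n) / Suc n) {0..t}"
proof -
  have "((\<lambda>s::real. s^Suc n / Suc n) has_real_derivative s^n) (at s within {0..t})" for s
    using DERIV_cdivide[OF DERIV_pow[of "Suc n" s], of "real (Suc n)"]
    by (auto intro: has_field_derivative_at_within)
  then have "((\<lambda>s::real. s^n) has_integral (t^(Suc n) / Suc n - 0^(Suc n) / Suc n)) {0..t}"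
    using assms by (intro fundamental_theorem_of_calculus)
      (auto simp: has_real_derivative_iff_has_vector_derivative[symmetric])
  then show ?thesis by simp
qed

lemma picard_iter_Suc_diff:
  assumes I: "finite I" and Mc: "\<And>i k. continuous_on {0..t} (\<lambda>t. M t i k)"
  shows "picard_iter I M x0 (Suc (Suc n)) t i - picard_iter I M x0 (Suc n) t i
       = integral {0..t} (\<lambda>s. \<Sum>k\<in>I. M s i k * (picard_iter I M x0 (Suc n) s k - picard_iter I M x0 n s k))"
proof -
  let ?x = "picard_iter I M x0"
  have int: "(\<lambda>s. \<Sum>k\<in>I. M s i k * ?x l s k) integrable_on {0..t}" for l
    by (intro integrable_continuous_real continuous_intros Mc continuous_on_picard_iter[OF I Mc])
  have "?x (Suc (Suc n)) t i - ?x (Suc n) t i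
      = integral {0..t} (\<lambda>s. \<Sum>k\<in>I. M s i k * ?x (Suc n) s k)
        - integral {0..t} (\<lambda>s. \<Sum>k\<in>I. M s i k * ?x n s k)"
    unfolding picard_iter.simps(2)[of _ _ _ "Suc n"] picard_iter.simps(2)[of _ _ _ n] by simp
  also have "\<dots> = integral {0..t} (\<lambda>s. \<Sum>k\<in>I. M s i k * (?x (Suc n) s k - ?x n s k))"
    by (simp del: picard_iter.simps add: integral_diff[OF int int, symmetric]
        sum_subtractf[symmetric] right_diff_distrib)
  finally show ?thesis .
qed

lemma picard_iter_diff_bound:
  assumes I: "finite I" and Mc: "\<And>i k. continuous_on {0..\<tau>} (\<lambda>t. M t i k)"
    and K: "\<And>s i. s \<in> {0..\<tau>} \<Longrightarrow> i \<in> I \<Longrightarrow> (\<Sum>k\<in>I. cmod (M s i k)) \<le> K"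
    and C: "\<And>t i. t \<in> {0..\<tau>} \<Longrightarrow> i \<in> I \<Longrightarrow>
              cmod (picard_iter I M x0 1 t i - picard_iter I M x0 0 t i) \<le> C"
    and "0 \<le> K" "0 \<le> C"
  shows "t \<in> {0..\<tau>} \<Longrightarrow> i \<in> I \<Longrightarrow>
     cmod (picard_iter I M x0 (Suc n) t i - picard_iter I M x0 n t i) \<le> C * (K * t)^n / fact n"
proof (induction n arbitrary: t i)
  case 0 then show ?case using C by simp
next
  case (Suc n)
  let ?x = "picard_iter I M x0"
  let ?d = "\<lambda>s k. ?x (Suc n) s k - ?x n s k"
  have sub: "{0..t} \<subseteq> {0..\<tau>}" using Suc.prems by auto
  have Mc': "continuous_on {0..t} (\<lambda>t. M t i k)" for i k
    by (rule continuous_on_subset[OF Mc sub])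
  have diff: "?x (Suc (Suc n)) t i - ?x (Suc n) t i = integral {0..t} (\<lambda>s. \<Sum>k\<in>I. M s i k * ?d s k)"
    by (rule picard_iter_Suc_diff[OF I Mc'])
  have bnd: "cmod (\<Sum>k\<in>I. M s i k * ?d s k) \<le> K * (C * (K * s)^n / fact n)" if s: "s \<in> {0..t}" for s
  proof -
    have "cmod (\<Sum>k\<in>I. M s i k * ?d s k) \<le> (\<Sum>k\<in>I. cmod (M s i k) * cmod (?d s k))"
      by (rule order_trans[OF norm_sum]) (simp add: norm_mult)
    also have "\<dots> \<le> (\<Sum>k\<in>I. cmod (M s i k) * (C * (K * s)^n / fact n))"
      by (rule sum_mono, rule mult_left_mono) (use Suc.IH s sub in auto)
    also have "\<dots> = (\<Sum>k\<in>I. cmod (M s i k)) * (C * (K * s)^n / fact n)"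
      by (rule sum_distrib_right[symmetric])
    also have "\<dots> \<le> K * (C * (K * s)^n / fact n)"
      by (rule mult_right_mono) (use K s sub Suc.prems assms(5,6) in auto)
    finally show ?thesis .
  qed
  have fe: "(\<lambda>s. K * (C * (K * s)^n / fact n)) = (\<lambda>s. (K * C * K^n / fact n) * s^n)"
    by (auto simp: power_mult_distrib field_simps)
  have pint: "((\<lambda>s. K * (C * (K * s)^n / fact n)) has_integral
      (K * C * K^n / fact n) * (t^(Suc n) / Suc n)) {0..t}"
    unfolding fe by (rule has_integral_mult_right, rule has_integral_power_Icc0) (use Suc.prems in auto)
  have "cmod (?x (Suc (Suc n)) t i - ?x (Suc n) t i)
      \<le> integral {0..t} (\<lambda>s. K * (C * (K * s)^n / fact n))"
    unfolding diff
  proof (rule integral_norm_bound_integral)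
    show "(\<lambda>s. \<Sum>k\<in>I. M s i k * ?d s k) integrable_on {0..t}"
      by (intro integrable_continuous_real continuous_intros Mc' continuous_on_picard_iter[OF I Mc'])
  qed (use bnd has_integral_integrable[OF pint] in auto)
  also have "\<dots> = (K * C * K^n / fact n) * (t^(Suc n) / Suc n)"
    by (rule integral_unique[OF pint])
  also have "\<dots> = C * (K * t)^(Suc n) / fact (Suc n)"
    by (simp add: power_mult_distrib divide_simps)
  finally show ?case .
qed

lemma uniform_limit_picard_iter:
  assumes I: "finite I" and Mc: "\<And>i k. continuous_on {0..\<tau>} (\<lambda>t. M t i k)" and i: "i \<in> I"
  shows "uniform_limit {0..\<tau>} (\<lambda>n t. picard_iter I M x0 n t i) (\<lambda>t. picard_limit I M x0 t i)
           sequentially"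
proof -
  let ?x = "picard_iter I M x0"
  obtain K where K0: "K \<ge> 0"
    and Kb: "\<And>s. s \<in> {0..\<tau>} \<Longrightarrow> norm (\<Sum>i\<in>I. \<Sum>k\<in>I. cmod (M s i k)) \<le> K"
    by (rule continuous_on_compact_bound[of "{0..\<tau>}" "\<lambda>s. \<Sum>i\<in>I. \<Sum>k\<in>I. cmod (M s i k)"])
       (auto intro!: continuous_intros Mc)
  have K: "(\<Sum>k\<in>I. cmod (M s j k)) \<le> K" if "s \<in> {0..\<tau>}" "j \<in> I" for s j
  proof -
    have "(\<Sum>k\<in>I. cmod (M s j k)) \<le> (\<Sum>i\<in>I. \<Sum>k\<in>I. cmod (M s i k))"
      by (rule member_le_sum) (use that I in \<open>auto intro: sum_nonneg\<close>)
    also have "\<dots> \<le> K" using Kb[OF that(1)] by simp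
    finally show ?thesis .
  qed
  obtain C where C0: "C \<ge> 0"
    and Cb: "\<And>s. s \<in> {0..\<tau>} \<Longrightarrow> norm (\<Sum>i\<in>I. cmod (?x 1 s i - ?x 0 s i)) \<le> C"
    by (rule continuous_on_compact_bound[of "{0..\<tau>}" "\<lambda>s. \<Sum>i\<in>I. cmod (?x 1 s i - ?x 0 s i)"])
       (auto intro!: continuous_intros continuous_on_picard_iter[OF I Mc] simp del: picard_iter.simps)
  have C: "cmod (?x 1 s j - ?x 0 s j) \<le> C" if "s \<in> {0..\<tau>}" "j \<in> I" for s j
  proof -
    have "cmod (?x 1 s j - ?x 0 s j) \<le> (\<Sum>i\<in>I. cmod (?x 1 s i - ?x 0 s i))"
      by (rule member_le_sum) (use that I in \<open>auto simp del: picard_iter.simps\<close>)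
    also have "\<dots> \<le> C" using Cb[OF that(1)] by simp
    finally show ?thesis .
  qed
  have bd: "norm (?x (Suc n) t i - ?x n t i) \<le> C * (K * \<tau>)^n / fact n" if t: "t \<in> {0..\<tau>}" for n t
  proof -
    have "norm (?x (Suc n) t i - ?x n t i) \<le> C * (K * t)^n / fact n"
      using picard_iter_diff_bound[OF I Mc K C K0 C0 t i] by simp
    also have "\<dots> \<le> C * (K * \<tau>)^n / fact n"
      using t K0 C0 by (auto intro!: divide_right_mono mult_left_mono power_mono)
    finally show ?thesis .
  qed
  have sm: "summable (\<lambda>n. C * (K * \<tau>)^n / fact n)"
    using summable_mult[OF summable_exp[of "K * \<tau>"], of C] by (simp add: field_simps)
  have "uniform_limit {0..\<tau>} (\<lambda>n t. \<Sum>l<n. ?x (Suc l) t i - ?x l t i)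
      (\<lambda>t. \<Sum>l. ?x (Suc l) t i - ?x l t i) sequentially"
    by (rule Weierstrass_m_test[OF bd sm])
  from uniform_limit_add[OF uniform_limit_const[where c="\<lambda>t. x0 i"] this]
  moreover have "(\<Sum>l<n. ?x (Suc l) t i - ?x l t i) = ?x n t i - x0 i" for n t
    using sum_lessThan_telescope[of "\<lambda>l. ?x l t i" n] by simp
  ultimately show ?thesis
    unfolding picard_limit_def by (simp del: picard_iter.simps)
qed

lemma continuous_on_picard_limit:
  assumes "finite I" "\<And>i k. continuous_on {0..\<tau>} (\<lambda>t. M t i k)" "i \<in> I"
  shows "continuous_on {0..\<tau>} (\<lambda>t. picard_limit I M x0 t i)"
  using assms
  by (intro uniform_limit_theorem[OF always_eventually uniform_limit_picard_iter])
     (auto intro: continuous_on_picard_iter)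

lemma picard_limit_integral_eq:
  assumes I: "finite I" and Mc: "\<And>i k. continuous_on {0..t} (\<lambda>t. M t i k)"
    and t: "0 \<le> t" and i: "i \<in> I"
  shows "picard_limit I M x0 t i = x0 i + integral {0..t} (\<lambda>s. \<Sum>k\<in>I. M s i k * picard_limit I M x0 s k)"
proof -
  let ?x = "picard_iter I M x0" and ?y = "picard_limit I M x0"
  have bM: "bounded ((\<lambda>s. M s i k) ` {0..t})" for k
    by (rule compact_imp_bounded, rule compact_continuous_image[OF Mc]) auto
  have y_bounded: "bounded ((\<lambda>s. ?y s k) ` {0..t})" if "k \<in> I" for k
    by (rule compact_imp_bounded, rule compact_continuous_image[OF continuous_on_picard_limit[OF I Mc that]])
       auto
  have u: "uniform_limit {0..t} (\<lambda>n s. \<Sum>k\<in>I. M s i k * ?x n s k) (\<lambda>s. \<Sum>k\<in>I. M s i k * ?y s k)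
      sequentially"
    by (rule uniform_limit_sum[OF I], rule uniform_lim_mult[OF uniform_limit_const
          uniform_limit_picard_iter[OF I Mc]]) (use bM y_bounded in auto)
  have c: "continuous_on {0..t} (\<lambda>s. \<Sum>k\<in>I. M s i k * ?x n s k)" for n
    by (intro continuous_intros Mc continuous_on_picard_iter[OF I Mc])
  obtain In J where In: "\<And>n. ((\<lambda>s. \<Sum>k\<in>I. M s i k * ?x n s k) has_integral In n) {0..t}"
    and J: "((\<lambda>s. \<Sum>k\<in>I. M s i k * ?y s k) has_integral J) {0..t}" and lim: "In \<longlonglongrightarrow> J"
    by (rule uniform_limit_integral[OF u c]) auto
  have "(\<lambda>n. ?x n t i) \<longlonglongrightarrow> ?y t i"
    using tendsto_uniform_limitI[OF uniform_limit_picard_iter[OF I Mc i], of t] t by simp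
  then have "(\<lambda>n. ?x (Suc n) t i) \<longlonglongrightarrow> ?y t i"
    by (rule LIMSEQ_Suc)
  moreover have "(\<lambda>n. ?x (Suc n) t i) = (\<lambda>n. x0 i + In n)"
    using In by (auto simp: integral_unique)
  ultimately have "(\<lambda>n. x0 i + In n) \<longlonglongrightarrow> ?y t i" by simp
  moreover have "(\<lambda>n. x0 i + In n) \<longlonglongrightarrow> x0 i + J" by (intro tendsto_intros lim)
  ultimately have "?y t i = x0 i + J" by (rule LIMSEQ_unique)
  then show ?thesis using J by (simp add: integral_unique)
qed

lemma at_within_Icc_eq_Ici:
  fixes t \<tau> :: real
  assumes "0 \<le> t" "t < \<tau>"
  shows "at t within {0..\<tau>} = at t within {0..}"
  by (rule at_within_nhd[of t "{..<\<tau>}"]) (use assms in auto)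

lemma linear_ode_exists:
  fixes M :: "real \<Rightarrow> 'i \<Rightarrow> 'i \<Rightarrow> complex"
  assumes I: "finite I" and Mc: "\<And>i k. continuous_on {0..} (\<lambda>t. M t i k)"
  shows "\<exists>x. (\<forall>i. x 0 i = x0 i) \<and>
     (\<forall>t\<ge>0. \<forall>i\<in>I. ((\<lambda>s. x s i) has_vector_derivative (\<Sum>k\<in>I. M t i k * x t k)) (at t within {0..}))"
proof -
  let ?y = "picard_limit I M x0"
  have Mc': "continuous_on {0..\<tau>} (\<lambda>t. M t i k)" for \<tau> i k
    by (rule continuous_on_subset[OF Mc]) auto
  have "?y 0 i = x0 i" for i
  proof -
    have "picard_iter I M x0 n 0 i = x0 i" for n by (cases n) auto
    then show ?thesis by (simp add: picard_limit_def)
  qed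
  moreover have "((\<lambda>s. ?y s i) has_vector_derivative (\<Sum>k\<in>I. M t i k * ?y t k)) (at t within {0..})"
    if t: "0 \<le> t" and i: "i \<in> I" for t i
  proof -
    have "continuous_on {0..t+1} (\<lambda>s. \<Sum>k\<in>I. M s i k * ?y s k)"
      by (intro continuous_intros Mc' continuous_on_picard_limit[OF I Mc'])
    then have "((\<lambda>u. x0 i + integral {0..u} (\<lambda>s. \<Sum>k\<in>I. M s i k * ?y s k)) has_vector_derivative
        (\<Sum>k\<in>I. M t i k * ?y t k)) (at t within {0..t+1})"
      using t by (auto intro!: derivative_eq_intros integral_has_vector_derivative)
    then have "((\<lambda>s. ?y s i) has_vector_derivative (\<Sum>k\<in>I. M t i k * ?y t k)) (at t within {0..t+1})"
      by (rule has_vector_derivative_transform_within[of _ _ _ _ 1])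
         (use t i picard_limit_integral_eq[OF I Mc' _ i] in auto)
    then show ?thesis
      using at_within_Icc_eq_Ici[of t "t+1"] t by simp
  qed
  ultimately show ?thesis by blast
qed

lemma has_real_derivative_cmod_power2:
  fixes z :: "real \<Rightarrow> complex"
  assumes "(z has_vector_derivative z') (at t within S)"
  shows "((\<lambda>s. (cmod (z s))^2) has_real_derivative 2 * Re (cnj (z t) * z')) (at t within S)"
proof -
  have re: "((\<lambda>s. Re (z s)) has_real_derivative Re z') (at t within S)"
   and im: "((\<lambda>s. Im (z s)) has_real_derivative Im z') (at t within S)"
    using assms by (auto simp: has_vector_derivative_complex_iff)
  have "((\<lambda>s. (Re (z s))^2 + (Im (z s))^2) has_real_derivative 2 * Re (cnj (z t) * z'))
      (at t within S)"
    by (rule derivative_eq_intros re im refl)+ (simp add: algebra_simps)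
  then show ?thesis by (simp add: cmod_power2)
qed

lemma at_within_Ici_eq_at:
  fixes x :: real
  assumes "0 < x"
  shows "at x within {0..} = at x"
proof -
  have "{0..} \<inter> {0<..} - {x} = {0<..} - {x}" by auto
  then show ?thesis using at_within_nhd[of x "{0<..}" "{0..}" UNIV] assms by auto
qed

lemma gronwall_nonpos:
  fixes f f' :: "real \<Rightarrow> real"
  assumes f: "\<And>s. 0 \<le> s \<Longrightarrow> (f has_real_derivative f' s) (at s within {0..})"
    and f': "\<And>s. s \<in> {0..t} \<Longrightarrow> f' s \<le> c * f s"
    and f0: "f 0 = 0" and t: "0 \<le> t"
  shows "f t \<le> 0"
proof -
  define g where "g s = exp (- c * s) * f s" for s
  have g': "(g has_real_derivative exp (- c * s) * (f' s - c * f s)) (at s within {0..})"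
    if "0 \<le> s" for s
    unfolding g_def by (rule derivative_eq_intros f[OF that] refl)+ (simp add: algebra_simps)
  have "g t \<le> g 0"
  proof (rule DERIV_nonpos_imp_decreasing_open[OF t])
    fix x assume x: "0 < x" "x < t"
    have "(g has_real_derivative exp (- c * x) * (f' x - c * f x)) (at x)"
      using g'[of x] x at_within_Ici_eq_at[of x] by simp
    moreover have "exp (- c * x) * (f' x - c * f x) \<le> 0"
      using f'[of x] x by (simp add: mult_nonneg_nonpos)
    ultimately show "\<exists>y. (g has_real_derivative y) (at x) \<and> y \<le> 0" by blast
  next
    show "continuous_on {0..t} g"
      unfolding continuous_on_eq_continuous_within
    proof
      fix x assume "x \<in> {0..t}"
      then have "continuous (at x within {0..}) g" using g'[of x] by (auto intro: DERIV_continuous)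
      then show "continuous (at x within {0..t}) g" by (rule continuous_within_subset) auto
    qed
  qed
  then show ?thesis using f0 by (simp add: g_def mult_le_0_iff)
qed

lemma sum_Re_cnj_mult_le:
  fixes D L :: "'i \<Rightarrow> complex"
  assumes I: "finite I" and K: "0 \<le> K" and L: "\<And>a. a \<in> I \<Longrightarrow> cmod (L a) \<le> K * (\<Sum>b\<in>I. cmod (D b))"
  shows "(\<Sum>a\<in>I. 2 * Re (cnj (D a) * L a)) \<le> 2 * K * (real (card I))^2 * (\<Sum>a\<in>I. (cmod (D a))^2)"
proof -
  define f where "f = (\<Sum>a\<in>I. (cmod (D a))^2)"
  define S where "S = (\<Sum>b\<in>I. cmod (D b))"
  have f0: "0 \<le> f" unfolding f_def by (auto intro: sum_nonneg)
  have "cmod (D b) \<le> sqrt f" if "b \<in> I" for b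
  proof -
    have "(cmod (D b))^2 \<le> f" unfolding f_def
      by (rule member_le_sum) (use that I in auto)
    then show ?thesis using real_le_rsqrt by blast
  qed
  then have S: "S \<le> real (card I) * sqrt f"
    unfolding S_def using sum_mono[of I "\<lambda>b. cmod (D b)" "\<lambda>_. sqrt f"] by simp
  have "(\<Sum>a\<in>I. 2 * Re (cnj (D a) * L a)) \<le> (\<Sum>a\<in>I. 2 * (cmod (D a) * cmod (L a)))"
  proof (rule sum_mono)
    fix a
    show "2 * Re (cnj (D a) * L a) \<le> 2 * (cmod (D a) * cmod (L a))"
      using complex_Re_le_cmod[of "cnj (D a) * L a"] by (simp add: norm_mult)
  qed
  also have "\<dots> \<le> (\<Sum>a\<in>I. 2 * (cmod (D a) * (K * S)))"
    by (rule sum_mono) (use L in \<open>auto intro!: mult_left_mono simp: S_def\<close>)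
  also have "\<dots> = 2 * K * S * S"
    by (simp add: S_def sum_distrib_left sum_distrib_right algebra_simps)
  also have "\<dots> \<le> 2 * K * (real (card I) * sqrt f) * (real (card I) * sqrt f)"
    using S f0 K by (intro mult_mono) (auto simp: S_def intro!: sum_nonneg mult_nonneg_nonneg)
  also have "\<dots> = 2 * K * (real (card I))^2 * f"
    using f0 by (simp add: power2_eq_square algebra_simps)
  finally show ?thesis unfolding f_def .
qed

text \<open>Uniqueness for linear systems: \<open>\<Sum>|D|\<^sup>2\<close> satisfies a Gronwall inequality.\<close>
lemma linearly_bounded_derivative_vanishes:
  fixes D L :: "real \<Rightarrow> 'i \<Rightarrow> complex"
  assumes I: "finite I"
    and der: "\<And>t a. 0 \<le> t \<Longrightarrow> a \<in> I \<Longrightarrow> ((\<lambda>s. D s a) has_vector_derivative L t a) (at t within {0..})"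
    and bnd: "\<And>\<tau>. \<exists>K. \<forall>t\<in>{0..\<tau>}. \<forall>a\<in>I. cmod (L t a) \<le> K * (\<Sum>b\<in>I. cmod (D t b))"
    and D0: "\<And>a. a \<in> I \<Longrightarrow> D 0 a = 0"
    and t: "0 \<le> t" and a: "a \<in> I"
  shows "D t a = 0"
proof -
  obtain K0 where K0: "\<forall>s\<in>{0..t}. \<forall>a\<in>I. cmod (L s a) \<le> K0 * (\<Sum>b\<in>I. cmod (D s b))"
    using bnd by blast
  have K: "cmod (L s a) \<le> \<bar>K0\<bar> * (\<Sum>b\<in>I. cmod (D s b))" if "s \<in> {0..t}" "a \<in> I" for s a
    using K0 that mult_right_mono[of K0 "\<bar>K0\<bar>" "\<Sum>b\<in>I. cmod (D s b)"] by (force intro: sum_nonneg)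
  define f where "f s = (\<Sum>a\<in>I. (cmod (D s a))^2)" for s
  define f' where "f' s = (\<Sum>a\<in>I. 2 * Re (cnj (D s a) * L s a))" for s
  have f': "(f has_real_derivative f' s) (at s within {0..})" if "0 \<le> s" for s
    unfolding f_def f'_def
    by (rule DERIV_sum, rule has_real_derivative_cmod_power2, rule der) (use that in auto)
  have f'_le: "f' s \<le> 2 * \<bar>K0\<bar> * (real (card I))^2 * f s" if "s \<in> {0..t}" for s
    unfolding f_def f'_def by (rule sum_Re_cnj_mult_le[OF I _ K[OF that]]) simp
  have "f t \<le> 0"
    by (rule gronwall_nonpos[OF f' f'_le]) (use D0 t in \<open>simp_all add: f_def\<close>)
  then have "f t = 0" unfolding f_def by (simp add: sum_nonneg antisym)
  then have "(cmod (D t a))^2 = 0"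
    using I a unfolding f_def by (subst (asm) sum_nonneg_eq_0_iff) auto
  then show ?thesis by simp
qed

lemma Re_skew_hermitian_form:
  fixes K :: "'i \<Rightarrow> 'i \<Rightarrow> complex"
  assumes K: "\<And>x y. x \<in> I \<Longrightarrow> y \<in> I \<Longrightarrow> K x y = - cnj (K y x)"
  shows "Re (\<Sum>x\<in>I. cnj (v x) * (\<Sum>y\<in>I. K x y * v y)) = 0"
proof -
  define z where "z = (\<Sum>x\<in>I. cnj (v x) * (\<Sum>y\<in>I. K x y * v y))"
  have "cnj z = (\<Sum>x\<in>I. \<Sum>y\<in>I. v x * cnj (K x y) * cnj (v y))"
    by (simp add: z_def sum_distrib_left mult.assoc)
  also have "\<dots> = (\<Sum>x\<in>I. \<Sum>y\<in>I. - (cnj (v y) * K y x * v x))"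
  proof (intro sum.cong refl)
    fix x y assume "x \<in> I" "y \<in> I"
    then have "cnj (K x y) = - K y x" using K[of y x] by simp
    then show "v x * cnj (K x y) * cnj (v y) = - (cnj (v y) * K y x * v x)" by simp
  qed
  also have "\<dots> = - (\<Sum>y\<in>I. \<Sum>x\<in>I. cnj (v y) * K y x * v x)"
    by (subst sum.swap) (simp add: sum_negf)
  also have "\<dots> = - z" by (simp add: z_def sum_distrib_left mult.assoc)
  finally have "cnj z = - z" .
  then have "Re (cnj z) = Re (- z)" by simp
  then have "Re z = 0" by simp
  then show ?thesis unfolding z_def .
qed

lemma skew_hermitian_ode_sum_cmod_power2_const:
  fixes x :: "real \<Rightarrow> 'i \<Rightarrow> complex"
  assumes I: "finite I"
    and der: "\<And>t i. 0 \<le> t \<Longrightarrow> i \<in> I \<Longrightarrow>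
       ((\<lambda>s. x s i) has_vector_derivative (\<Sum>k\<in>I. K t i k * x t k)) (at t within {0..})"
    and skew: "\<And>t i k. 0 \<le> t \<Longrightarrow> i \<in> I \<Longrightarrow> k \<in> I \<Longrightarrow> K t i k = - cnj (K t k i)"
    and t: "0 \<le> t"
  shows "(\<Sum>i\<in>I. (cmod (x t i))^2) = (\<Sum>i\<in>I. (cmod (x 0 i))^2)"
proof -
  let ?f = "\<lambda>s. \<Sum>i\<in>I. (cmod (x s i))^2"
  have "\<exists>c. \<forall>s\<in>{0..}. ?f s = c"
  proof (rule has_derivative_zero_constant)
    fix s :: real assume s: "s \<in> {0..}"
    let ?q = "\<Sum>i\<in>I. cnj (x s i) * (\<Sum>k\<in>I. K s i k * x s k)"
    have "(?f has_real_derivative (\<Sum>i\<in>I. 2 * Re (cnj (x s i) * (\<Sum>k\<in>I. K s i k * x s k))))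
        (at s within {0..})"
      by (rule DERIV_sum, rule has_real_derivative_cmod_power2, rule der) (use s in auto)
    moreover have "(\<Sum>i\<in>I. 2 * Re (cnj (x s i) * (\<Sum>k\<in>I. K s i k * x s k))) = 2 * Re ?q"
      by (simp add: Re_sum sum_distrib_left)
    moreover have "Re ?q = 0"
      using s by (intro Re_skew_hermitian_form skew) auto
    ultimately have "(?f has_derivative (*) 0) (at s within {0..})"
      by (simp add: has_field_derivative_def)
    moreover have "((*) (0::real)) = (\<lambda>h. 0)" by auto
    ultimately show "(?f has_derivative (\<lambda>h. 0)) (at s within {0..})" by simp
  qed simp
  then show ?thesis using t by force
qed

section \<open>Index lists of the tensors\<close>

lemma tdims_Suc: "tdims (Suc m) d1 d2 = tdims m d1 d2 @ [d1 m, d2 m]"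
  by (simp add: tdims_def)

lemma length_tdims [simp]: "length (tdims m d1 d2) = 2 * m"
  by (induction m) (auto simp: tdims_Suc tdims_def)

lemma tdims_nth [simp]:
  assumes "p < m"
  shows "tdims m d1 d2 ! (2*p) = d1 p" "tdims m d1 d2 ! Suc (2*p) = d2 p"
proof -
  have "\<forall>p<m. tdims m d1 d2 ! (2*p) = d1 p \<and> tdims m d1 d2 ! Suc (2*p) = d2 p"
    by (induction m) (auto simp: tdims_Suc nth_append less_Suc_eq)
  then show "tdims m d1 d2 ! (2*p) = d1 p" "tdims m d1 d2 ! Suc (2*p) = d2 p"
    using assms by auto
qed

lemma idxs_Nil: "idxs [] = {[]}"
  by (auto simp: idxs_def)

lemma idxs_snoc: "idxs (xs @ [u]) = (\<lambda>(a, x). a @ [x]) ` (idxs xs \<times> {..<u})"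
proof (intro set_eqI iffI)
  fix as assume as: "as \<in> idxs (xs @ [u])"
  then have len: "length as = Suc (length xs)" by (simp add: idxs_def)
  then obtain a x where ax: "as = a @ [x]"
    by (metis length_Suc_conv_rev)
  have la: "length a = length xs" using len ax by simp
  have b: "\<forall>k<Suc (length xs). (a @ [x]) ! k < (xs @ [u]) ! k" using as ax by (simp add: idxs_def)
  have "a \<in> idxs xs" unfolding idxs_def
  proof (intro CollectI conjI allI impI)
    fix k assume "k < length xs"
    then show "a ! k < xs ! k" using b[rule_format, of k] la by (simp add: nth_append)
  qed (use la in simp)
  moreover have "x < u" using b[rule_format, of "length xs"] la by (simp add: nth_append)
  ultimately show "as \<in> (\<lambda>(a, x). a @ [x]) ` (idxs xs \<times> {..<u})" using ax by auto
next
  fix as assume "as \<in> (\<lambda>(a, x). a @ [x]) ` (idxs xs \<times> {..<u})"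
  then obtain a x where "as = a @ [x]" "a \<in> idxs xs" "x < u" by auto
  then show "as \<in> idxs (xs @ [u])"
    by (auto simp: idxs_def nth_append less_Suc_eq)
qed

lemma finite_idxs[simp]: "finite (idxs xs)"
  by (induction xs rule: rev_induct) (auto simp: idxs_Nil idxs_snoc)

lemma idxs_length: "a \<in> idxs dims \<Longrightarrow> length a = length dims"
  by (simp add: idxs_def)

lemma idxs_list_update:
  assumes "a \<in> idxs dims" "c < dims ! r"
  shows "a[r := c] \<in> idxs dims"
proof -
  have "a[r := c] ! k < dims ! k" if "k < length dims" for k
    using assms that by (cases "k = r") (auto simp: idxs_def)
  then show ?thesis using assms by (simp add: idxs_def)
qed

lemma idxs_nth: "a \<in> idxs dims \<Longrightarrow> r < length dims \<Longrightarrow> a ! r < dims ! r"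
  by (simp add: idxs_def)

lemma idxs_tdims_Suc:
  "idxs (tdims (Suc m) d1 d2) = (\<lambda>(a, x, y). a @ [x, y]) ` (idxs (tdims m d1 d2) \<times> {..<d1 m} \<times> {..<d2 m})"
proof -
  have "idxs (tdims (Suc m) d1 d2) = idxs ((tdims m d1 d2 @ [d1 m]) @ [d2 m])"
    by (simp add: tdims_Suc)
  also have "\<dots> = (\<lambda>(a, y). a @ [y]) ` ((\<lambda>(a, x). a @ [x]) ` (idxs (tdims m d1 d2) \<times> {..<d1 m}) \<times> {..<d2 m})"
    by (simp only: idxs_snoc)
  also have "\<dots> = (\<lambda>(a, x, y). a @ [x, y]) ` (idxs (tdims m d1 d2) \<times> {..<d1 m} \<times> {..<d2 m})"
    by (force simp: image_iff)
  finally show ?thesis .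
qed

lemma nth_append_pair:
  assumes "length a = 2 * m"
  shows "(a @ [x, y]) ! (2*m) = x" "(a @ [x, y]) ! Suc (2*m) = y"
    "p < m \<Longrightarrow> (a @ [x, y]) ! (2*p) = a ! (2*p)"
    "p < m \<Longrightarrow> (a @ [x, y]) ! Suc (2*p) = a ! Suc (2*p)"
  using assms by (auto simp: nth_append)

lemma sum_idxs_tdims_prod:
  fixes g :: "nat \<Rightarrow> nat \<Rightarrow> nat \<Rightarrow> 'a::comm_semiring_1"
  shows "(\<Sum>a\<in>idxs (tdims m d1 d2). \<Prod>p<m. g p (a!(2*p)) (a!(2*p+1)))
       = (\<Prod>p<m. \<Sum>x<d1 p. \<Sum>y<d2 p. g p x y)"
proof (induction m)
  case 0 then show ?case by (simp add: tdims_def idxs_Nil)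
next
  case (Suc m)
  let ?f = "\<lambda>(a, x, y). (a::nat list) @ [x::nat, y::nat]"
  have inj: "inj_on ?f (idxs (tdims m d1 d2) \<times> {..<d1 m} \<times> {..<d2 m})"
    by (auto simp: inj_on_def dest: idxs_length)
  have pr: "(\<Prod>p<Suc m. g p ((a @ [x, y])!(2*p)) ((a @ [x, y])!(2*p+1)))
      = (\<Prod>p<m. g p (a!(2*p)) (a!(2*p+1))) * g m x y" if "a \<in> idxs (tdims m d1 d2)" for a x y
  proof -
    have l: "length a = 2 * m" using idxs_length[OF that] by simp
    have "(\<Prod>p<m. g p ((a @ [x, y])!(2*p)) ((a @ [x, y])!(2*p+1))) = (\<Prod>p<m. g p (a!(2*p)) (a!(2*p+1)))"
      by (rule prod.cong) (auto simp: nth_append l)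
    then show ?thesis by (simp add: l nth_append)
  qed
  have "(\<Sum>a\<in>idxs (tdims (Suc m) d1 d2). \<Prod>p<Suc m. g p (a!(2*p)) (a!(2*p+1)))
      = (\<Sum>(a, x, y)\<in>idxs (tdims m d1 d2) \<times> {..<d1 m} \<times> {..<d2 m}.
           (\<Prod>p<m. g p (a!(2*p)) (a!(2*p+1))) * g m x y)"
    unfolding idxs_tdims_Suc sum.reindex[OF inj]
    by (rule sum.cong) (auto simp: nth_append_pair dest!: idxs_length intro!: prod.cong)
  also have "\<dots> = (\<Sum>a\<in>idxs (tdims m d1 d2). \<Sum>x<d1 m. \<Sum>y<d2 m. (\<Prod>p<m. g p (a!(2*p)) (a!(2*p+1))) * g m x y)"
    by (simp add: sum.cartesian_product)
  also have "\<dots> = (\<Sum>a\<in>idxs (tdims m d1 d2). \<Prod>p<m. g p (a!(2*p)) (a!(2*p+1))) * (\<Sum>x<d1 m. \<Sum>y<d2 m. g m x y)"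
    by (subst sum_distrib_right) (simp only: sum_distrib_left)
  also have "\<dots> = (\<Prod>p<Suc m. \<Sum>x<d1 p. \<Sum>y<d2 p. g p x y)"
    using Suc by simp
  finally show ?case .
qed

section \<open>The Lohe model with single-zero couplings\<close>

text \<open>\<open>mode_coupling dims T\<^sub>j T\<^sub>c r\<close> is the matrix \<open>H\<^sub>r\<close> through which the coupling pattern
  whose only zero sits at position \<open>r\<close> acts on \<open>T\<^sub>j\<close>: its contribution to the Lohe right-hand side
  is \<open>\<Sum>\<^sub>c H\<^sub>r(\<alpha>\<^sub>r, c) T\<^sub>j(\<alpha>[r:=c])\<close> (lemma \<open>lohe_rhs_eq_mode_rhs\<close>).\<close>

definition mode_coupling ::
  "nat list \<Rightarrow> (nat list \<Rightarrow> complex) \<Rightarrow> (nat list \<Rightarrow> complex) \<Rightarrow> nat \<Rightarrow> nat \<Rightarrow> nat \<Rightarrow> complex" where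
  "mode_coupling dims Tj Tc r a c =
     (\<Sum>a1\<in>{a1\<in>idxs dims. a1!r = c}. Tc (a1[r:=a]) * cnj (Tj a1) - Tj (a1[r:=a]) * cnj (Tc a1))"

definition kappa_mode :: "real \<Rightarrow> real \<Rightarrow> nat \<Rightarrow> real" where
  "kappa_mode \<kappa>1 \<kappa>2 r = (if even r then \<kappa>1 else \<kappa>2)"

definition mode_rhs :: "nat list \<Rightarrow> real \<Rightarrow> real \<Rightarrow> (nat list \<Rightarrow> nat list \<Rightarrow> complex)
    \<Rightarrow> (nat \<Rightarrow> nat \<Rightarrow> nat \<Rightarrow> complex) \<Rightarrow> (nat list \<Rightarrow> complex) \<Rightarrow> nat list \<Rightarrow> complex" where
  "mode_rhs dims \<kappa>1 \<kappa>2 A H X a0 = (\<Sum>a1\<in>idxs dims. A a0 a1 * X a1)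
     + (\<Sum>r<length dims. of_real (kappa_mode \<kappa>1 \<kappa>2 r) * (\<Sum>c<dims!r. H r (a0!r) c * X (a0[r:=c])))"

definition factor_rhs ::
  "nat \<Rightarrow> nat \<Rightarrow> (nat \<Rightarrow> nat \<Rightarrow> nat \<Rightarrow> nat \<Rightarrow> complex) \<Rightarrow> real \<Rightarrow> real
   \<Rightarrow> (nat \<Rightarrow> nat \<Rightarrow> complex) \<Rightarrow> (nat \<Rightarrow> nat \<Rightarrow> complex) \<Rightarrow> cmat \<Rightarrow> cmat" where
  "factor_rhs n1 n2 Bp \<kappa>1 \<kappa>2 H1 H2 X a b =
     apply4 n1 n2 Bp X a b + of_real \<kappa>1 * (\<Sum>c<n1. H1 a c * X c b) + of_real \<kappa>2 * (\<Sum>c<n2. H2 b c * X a c)"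

lemma length_onezero[simp]: "length (onezero n r) = n"
  by (simp add: onezero_def)

lemma sel_onezero:
  assumes "length a0 = n" "length a1 = n" "r < n"
  shows "sel (onezero n r) a0 a1 = a1[r := a0!r]"
  by (rule nth_equalityI) (use assms in \<open>auto simp: sel_def onezero_def nth_list_update\<close>)

lemma sel_not_onezero:
  assumes "length a0 = n" "length a1 = n" "r < n"
  shows "sel (map Not (onezero n r)) a0 a1 = a0[r := a1!r]"
  by (rule nth_equalityI) (use assms in \<open>auto simp: sel_def onezero_def nth_list_update\<close>)

lemma onezero_eq: "r < n \<Longrightarrow> r' < n \<Longrightarrow> onezero n r = onezero n r' \<Longrightarrow> r = r'"
proof -
  assume r: "r < n" "r' < n" "onezero n r = onezero n r'"
  then have "onezero n r ! r = onezero n r' ! r" by simp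
  then show "r = r'" using r by (auto simp: onezero_def)
qed

lemma inj_on_onezero: "inj_on (onezero n) {..<n}"
  by (auto simp: inj_on_def intro: onezero_eq)

lemma kappa_coupling_onezero:
  assumes "r < 2*m"
  shows "kappa_coupling m \<kappa>1 \<kappa>2 (onezero (2*m) r) = kappa_mode \<kappa>1 \<kappa>2 r"
proof (cases "even r")
  case True
  then obtain q where q: "r = 2*q" by blast
  with assms have "q < m" by simp
  then have "onezero (2*m) r \<in> Lambda1 m" using q by (auto simp: Lambda1_def)
  then show ?thesis using True by (simp add: kappa_coupling_def kappa_mode_def)
next
  case False
  then obtain q where q: "r = 2*q+1" by (metis oddE)
  with assms have "q < m" by simp
  then have "onezero (2*m) r \<in> Lambda2 m" using q by (auto simp: Lambda2_def)
  moreover have "onezero (2*m) r \<notin> Lambda1 m"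
  proof
    assume "onezero (2*m) r \<in> Lambda1 m"
    then obtain q' where "q' < m" "onezero (2*m) r = onezero (2*m) (2*q')" by (auto simp: Lambda1_def)
    then have "r = 2*q'" using assms by (intro onezero_eq[of _ "2*m"]) auto
    then show False using False by simp
  qed
  ultimately show ?thesis using False by (simp add: kappa_coupling_def kappa_mode_def)
qed

lemma sum_kappa_coupling:
  fixes F :: "bool list \<Rightarrow> complex"
  shows "(\<Sum>i\<in>{i. length i = 2*m}. complex_of_real (kappa_coupling m \<kappa>1 \<kappa>2 i) * F i)
       = (\<Sum>r<2*m. complex_of_real (kappa_mode \<kappa>1 \<kappa>2 r) * F (onezero (2*m) r))"
proof -
  have fin: "finite {i::bool list. length i = 2*m}"
    using finite_lists_length_eq[of "UNIV::bool set" "2*m"] by simp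
  have sub: "onezero (2*m) ` {..<2*m} \<subseteq> {i. length i = 2*m}" by auto
  have z: "kappa_coupling m \<kappa>1 \<kappa>2 i = 0" if "i \<in> {i. length i = 2*m} - onezero (2*m) ` {..<2*m}" for i
  proof -
    have "i \<notin> Lambda1 m" "i \<notin> Lambda2 m" using that by (auto simp: Lambda1_def Lambda2_def)
    then show ?thesis by (simp add: kappa_coupling_def)
  qed
  have "(\<Sum>i\<in>{i. length i = 2*m}. complex_of_real (kappa_coupling m \<kappa>1 \<kappa>2 i) * F i)
      = (\<Sum>i\<in>onezero (2*m) ` {..<2*m}. complex_of_real (kappa_coupling m \<kappa>1 \<kappa>2 i) * F i)"
    by (rule sum.mono_neutral_right[OF fin sub]) (use z in auto)
  also have "\<dots> = (\<Sum>r<2*m. complex_of_real (kappa_mode \<kappa>1 \<kappa>2 r) * F (onezero (2*m) r))"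
    by (simp add: sum.reindex[OF inj_on_onezero] kappa_coupling_onezero)
  finally show ?thesis .
qed

lemma sum_group_by_nth:
  fixes F :: "nat list \<Rightarrow> 'a::comm_semiring_1"
  assumes "finite S" "\<And>a1. a1 \<in> S \<Longrightarrow> a1!r < n"
  shows "(\<Sum>a1\<in>S. F a1 * X (a1!r)) = (\<Sum>c<n. (\<Sum>a1\<in>{a1\<in>S. a1!r = c}. F a1) * X c)"
proof -
  have "(\<Sum>a1\<in>S. F a1 * X (a1!r)) = (\<Sum>c<n. \<Sum>a1\<in>{a1\<in>S. a1!r = c}. F a1 * X (a1!r))"
    by (rule sum.group[symmetric]) (use assms in auto)
  also have "\<dots> = (\<Sum>c<n. (\<Sum>a1\<in>{a1\<in>S. a1!r = c}. F a1) * X c)"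
    by (rule sum.cong[OF refl]) (simp add: sum_distrib_right)
  finally show ?thesis .
qed

lemma lohe_rhs_eq_mode_rhs:
  assumes a0: "a0 \<in> idxs (tdims m d1 d2)"
  shows "lohe_rhs (tdims m d1 d2) (kappa_coupling m \<kappa>1 \<kappa>2) A Tj Tc a0
       = mode_rhs (tdims m d1 d2) \<kappa>1 \<kappa>2 A (\<lambda>r. mode_coupling (tdims m d1 d2) Tj Tc r) Tj a0"
proof -
  let ?D = "tdims m d1 d2"
  have la0: "length a0 = 2*m" using idxs_length[OF a0] by simp
  have inner: "(\<Sum>a1\<in>idxs ?D.
             Tc (sel (onezero (2*m) r) a0 a1) * cnj (Tj a1) * Tj (sel (map Not (onezero (2*m) r)) a0 a1)
             - Tj (sel (onezero (2*m) r) a0 a1) * cnj (Tc a1) * Tj (sel (map Not (onezero (2*m) r)) a0 a1))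
       = (\<Sum>c<?D!r. mode_coupling ?D Tj Tc r (a0!r) c * Tj (a0[r:=c]))" if r: "r < 2*m" for r
  proof -
    have "(\<Sum>a1\<in>idxs ?D.
             Tc (sel (onezero (2*m) r) a0 a1) * cnj (Tj a1) * Tj (sel (map Not (onezero (2*m) r)) a0 a1)
             - Tj (sel (onezero (2*m) r) a0 a1) * cnj (Tc a1) * Tj (sel (map Not (onezero (2*m) r)) a0 a1))
        = (\<Sum>a1\<in>idxs ?D. (Tc (a1[r := a0!r]) * cnj (Tj a1) - Tj (a1[r := a0!r]) * cnj (Tc a1))
              * (\<lambda>c. Tj (a0[r := c])) (a1!r))"
      by (rule sum.cong[OF refl])
         (use la0 r in \<open>auto simp: sel_onezero sel_not_onezero algebra_simps dest: idxs_length\<close>)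
    also have "\<dots> = (\<Sum>c<?D!r. mode_coupling ?D Tj Tc r (a0!r) c * Tj (a0[r:=c]))"
      by (subst sum_group_by_nth[where n="?D!r"]) (use r in \<open>auto simp: mode_coupling_def intro: idxs_nth\<close>)
    finally show ?thesis .
  qed
  have "(\<Sum>r<2*m. complex_of_real (kappa_mode \<kappa>1 \<kappa>2 r) * (\<Sum>a1\<in>idxs ?D.
             Tc (sel (onezero (2*m) r) a0 a1) * cnj (Tj a1) * Tj (sel (map Not (onezero (2*m) r)) a0 a1)
             - Tj (sel (onezero (2*m) r) a0 a1) * cnj (Tc a1) * Tj (sel (map Not (onezero (2*m) r)) a0 a1)))
      = (\<Sum>r<2*m. complex_of_real (kappa_mode \<kappa>1 \<kappa>2 r) * (\<Sum>c<?D!r. mode_coupling ?D Tj Tc r (a0!r) c * Tj (a0[r:=c])))"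
    by (rule sum.cong[OF refl]) (simp add: inner)
  then show ?thesis
    unfolding lohe_rhs_def mode_rhs_def length_tdims sum_kappa_coupling by simp
qed

lemma prod_indicator_pair:
  fixes P Q :: "nat \<Rightarrow> bool"
  assumes "finite S"
  shows "(\<Prod>l\<in>S. (if P l then 1 else 0) * (if Q l then 1 else 0) :: complex)
       = (if \<forall>l\<in>S. P l \<and> Q l then 1 else 0)"
  using assms by (induction S rule: finite_induct) auto

lemma nth_list_update_pair:
  assumes "2*k+1 < length a"
  shows "a[2*k := c, 2*k+1 := d] ! (2*k) = c" "a[2*k := c, 2*k+1 := d] ! (2*k+1) = d"
    "l \<noteq> k \<Longrightarrow> a[2*k := c, 2*k+1 := d] ! (2*l) = a ! (2*l)"
    "l \<noteq> k \<Longrightarrow> a[2*k := c, 2*k+1 := d] ! (2*l+1) = a ! (2*l+1)"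
  using assms by (auto simp: nth_list_update)

lemma idxs_agree_off_factor:
  assumes a0: "a0 \<in> idxs (tdims m d1 d2)" and k: "k < m"
  shows "{a1 \<in> idxs (tdims m d1 d2). \<forall>l\<in>{..<m} - {k}. a0!(2*l) = a1!(2*l) \<and> a0!(2*l+1) = a1!(2*l+1)}
       = (\<lambda>(c, d). a0[2*k := c, 2*k+1 := d]) ` ({..<d1 k} \<times> {..<d2 k})"
proof (intro set_eqI iffI)
  have la0: "length a0 = 2*m" using idxs_length[OF a0] by simp
  fix a1 assume "a1 \<in> {a1 \<in> idxs (tdims m d1 d2). \<forall>l\<in>{..<m} - {k}. a0!(2*l) = a1!(2*l) \<and> a0!(2*l+1) = a1!(2*l+1)}"
  then have a1: "a1 \<in> idxs (tdims m d1 d2)" and ag: "\<And>l. l < m \<Longrightarrow> l \<noteq> k \<Longrightarrow> a0!(2*l) = a1!(2*l) \<and> a0!(2*l+1) = a1!(2*l+1)"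
    by auto
  have la1: "length a1 = 2*m" using idxs_length[OF a1] by simp
  have eq: "a1 = a0[2*k := a1!(2*k), 2*k+1 := a1!(2*k+1)]"
  proof (rule nth_equalityI)
    show "length a1 = length (a0[2*k := a1!(2*k), 2*k+1 := a1!(2*k+1)])" using la0 la1 by simp
  next
    fix i assume i: "i < length a1"
    define l where "l = i div 2"
    have il: "i = 2*l \<or> i = 2*l+1" unfolding l_def by presburger
    have lm: "l < m" using i la1 unfolding l_def by simp
    show "a1 ! i = a0[2*k := a1!(2*k), 2*k+1 := a1!(2*k+1)] ! i"
    proof (cases "l = k")
      case True then show ?thesis using il la0 lm by (auto simp: nth_list_update)
    next
      case False then show ?thesis using il la0 lm ag[OF lm False] by (auto simp: nth_list_update)
    qed
  qed
  have "a1!(2*k) < d1 k" "a1!(2*k+1) < d2 k"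
    using idxs_nth[OF a1, of "2*k"] idxs_nth[OF a1, of "2*k+1"] k by (auto simp: tdims_nth)
  then show "a1 \<in> (\<lambda>(c, d). a0[2*k := c, 2*k+1 := d]) ` ({..<d1 k} \<times> {..<d2 k})"
    using eq by force
next
  have la0: "length a0 = 2*m" using idxs_length[OF a0] by simp
  fix a1 assume "a1 \<in> (\<lambda>(c, d). a0[2*k := c, 2*k+1 := d]) ` ({..<d1 k} \<times> {..<d2 k})"
  then obtain c d where a1: "a1 = a0[2*k := c, 2*k+1 := d]" and cd: "c < d1 k" "d < d2 k" by auto
  have "a1 \<in> idxs (tdims m d1 d2)" unfolding a1
    by (intro idxs_list_update a0) (use cd k in \<open>auto simp: tdims_nth\<close>)
  moreover have "\<forall>l\<in>{..<m} - {k}. a0!(2*l) = a1!(2*l) \<and> a0!(2*l+1) = a1!(2*l+1)"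
    unfolding a1 using k la0 by (auto simp: nth_list_update)
  ultimately show "a1 \<in> {a1 \<in> idxs (tdims m d1 d2). \<forall>l\<in>{..<m} - {k}. a0!(2*l) = a1!(2*l) \<and> a0!(2*l+1) = a1!(2*l+1)}"
    by simp
qed

lemma sum_free_flow:
  assumes a0: "a0 \<in> idxs (tdims m d1 d2)"
  shows "(\<Sum>a1\<in>idxs (tdims m d1 d2). free_flow m B j a0 a1 * X a1)
       = (\<Sum>k<m. \<Sum>c<d1 k. \<Sum>d<d2 k. B j k (a0!(2*k)) (a0!(2*k+1)) c d * X (a0[2*k := c, 2*k+1 := d]))"
proof -
  let ?D = "tdims m d1 d2"
  have la0: "length a0 = 2*m" using idxs_length[OF a0] by simp
  have "(\<Sum>a1\<in>idxs ?D. free_flow m B j a0 a1 * X a1)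
     = (\<Sum>k<m. \<Sum>a1\<in>idxs ?D. B j k (a0!(2*k)) (a0!(2*k+1)) (a1!(2*k)) (a1!(2*k+1)) *
          (\<Prod>l\<in>{..<m} - {k}. (if a0!(2*l) = a1!(2*l) then 1 else 0) * (if a0!(2*l+1) = a1!(2*l+1) then 1 else 0)) * X a1)"
    unfolding free_flow_def by (subst sum.swap) (simp add: sum_distrib_right)
  also have "\<dots> = (\<Sum>k<m. \<Sum>c<d1 k. \<Sum>d<d2 k. B j k (a0!(2*k)) (a0!(2*k+1)) c d * X (a0[2*k := c, 2*k+1 := d]))"
  proof (rule sum.cong[OF refl])
    fix k assume "k \<in> {..<m}"
    then have k: "k < m" by simp
    let ?P = "\<lambda>a1. \<forall>l\<in>{..<m} - {k}. a0!(2*l) = a1!(2*l) \<and> a0!(2*l+1) = a1!(2*l+1)"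
    let ?g = "\<lambda>a1. B j k (a0!(2*k)) (a0!(2*k+1)) (a1!(2*k)) (a1!(2*k+1)) * X a1"
    have inj: "inj_on (\<lambda>(c, d). a0[2*k := c, 2*k+1 := d]) ({..<d1 k} \<times> {..<d2 k})"
    proof -
      have "c = c' \<and> d = d'" if h: "a0[2*k := c, 2*k+1 := d] = a0[2*k := c', 2*k+1 := d']" for c d c' d'
      proof -
        have "a0[2*k := c, 2*k+1 := d] ! (2*k) = a0[2*k := c', 2*k+1 := d'] ! (2*k)"
          "a0[2*k := c, 2*k+1 := d] ! (2*k+1) = a0[2*k := c', 2*k+1 := d'] ! (2*k+1)" using h by auto
        then show ?thesis using nth_list_update_pair k la0 by simp
      qed
      then show ?thesis by (auto simp: inj_on_def)
    qed
    have "(\<Sum>a1\<in>idxs ?D. B j k (a0!(2*k)) (a0!(2*k+1)) (a1!(2*k)) (a1!(2*k+1)) *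
          (\<Prod>l\<in>{..<m} - {k}. (if a0!(2*l) = a1!(2*l) then 1 else 0) * (if a0!(2*l+1) = a1!(2*l+1) then 1 else 0)) * X a1)
        = (\<Sum>a1\<in>idxs ?D. if ?P a1 then ?g a1 else 0)"
      by (rule sum.cong[OF refl]) (simp add: prod_indicator_pair)
    also have "\<dots> = (\<Sum>a1\<in>{a1\<in>idxs ?D. ?P a1}. ?g a1)"
      by (rule sum.inter_filter[symmetric]) simp
    also have "\<dots> = (\<Sum>(c,d)\<in>{..<d1 k} \<times> {..<d2 k}. ?g (a0[2*k := c, 2*k+1 := d]))"
      unfolding idxs_agree_off_factor[OF a0 k] sum.reindex[OF inj] by (simp add: case_prod_beta)
    also have "\<dots> = (\<Sum>c<d1 k. \<Sum>d<d2 k. B j k (a0!(2*k)) (a0!(2*k+1)) c d * X (a0[2*k := c, 2*k+1 := d]))"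
      unfolding sum.cartesian_product[symmetric] using nth_list_update_pair k la0 by simp
    finally show "(\<Sum>a1\<in>idxs ?D. B j k (a0!(2*k)) (a0!(2*k+1)) (a1!(2*k)) (a1!(2*k+1)) *
          (\<Prod>l\<in>{..<m} - {k}. (if a0!(2*l) = a1!(2*l) then 1 else 0) * (if a0!(2*l+1) = a1!(2*l+1) then 1 else 0)) * X a1)
        = (\<Sum>c<d1 k. \<Sum>d<d2 k. B j k (a0!(2*k)) (a0!(2*k+1)) c d * X (a0[2*k := c, 2*k+1 := d]))" .
  qed
  finally show ?thesis .
qed

lemma mtensor_split_factor:
  assumes q: "q < m" and ag: "\<And>l. l < m \<Longrightarrow> l \<noteq> q \<Longrightarrow> a'!(2*l) = a!(2*l) \<and> a'!(2*l+1) = a!(2*l+1)"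
  shows "mtensor m V a' = V q (a'!(2*q)) (a'!(2*q+1)) * (\<Prod>l\<in>{..<m} - {q}. V l (a!(2*l)) (a!(2*l+1)))"
proof -
  have "mtensor m V a' = V q (a'!(2*q)) (a'!(2*q+1)) * (\<Prod>l\<in>{..<m} - {q}. V l (a'!(2*l)) (a'!(2*l+1)))"
    unfolding mtensor_def by (rule prod.remove) (use q in auto)
  also have "(\<Prod>l\<in>{..<m} - {q}. V l (a'!(2*l)) (a'!(2*l+1))) = (\<Prod>l\<in>{..<m} - {q}. V l (a!(2*l)) (a!(2*l+1)))"
    by (rule prod.cong[OF refl]) (use ag in auto)
  finally show ?thesis .
qed

lemma sum_lessThan_double:
  fixes f :: "nat \<Rightarrow> 'a::comm_monoid_add"
  shows "(\<Sum>r<2*m. f r) = (\<Sum>q<m. f (2*q) + f (2*q+1))"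
  by (induction m) (auto simp: algebra_simps)

lemma has_vector_derivative_mtensor:
  fixes V :: "real \<Rightarrow> nat \<Rightarrow> cmat"
  assumes "\<And>p. p < m \<Longrightarrow> ((\<lambda>s. V s p (a!(2*p)) (a!(2*p+1))) has_vector_derivative V' p) (at t within S)"
  shows "((\<lambda>s. mtensor m (V s) a) has_vector_derivative
           (\<Sum>q<m. V' q * (\<Prod>l\<in>{..<m}-{q}. V t l (a!(2*l)) (a!(2*l+1))))) (at t within S)"
proof -
  have "((\<lambda>s. \<Prod>p<m. V s p (a!(2*p)) (a!(2*p+1))) has_derivative
         (\<lambda>y. \<Sum>q<m. (y *\<^sub>R V' q) * (\<Prod>l\<in>{..<m}-{q}. V t l (a!(2*l)) (a!(2*l+1))))) (at t within S)"
    by (rule has_derivative_prod) (use assms in \<open>auto simp: has_vector_derivative_def\<close>)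
  moreover have "(\<lambda>y. \<Sum>q<m. (y *\<^sub>R V' q) * (\<Prod>l\<in>{..<m}-{q}. V t l (a!(2*l)) (a!(2*l+1))))
      = (\<lambda>y. y *\<^sub>R (\<Sum>q<m. V' q * (\<Prod>l\<in>{..<m}-{q}. V t l (a!(2*l)) (a!(2*l+1)))))"
    by (auto simp: fun_eq_iff scaleR_sum_right)
  ultimately show ?thesis unfolding mtensor_def has_vector_derivative_def by simp
qed

lemma has_vector_derivative_mtensor_mode_rhs:
  fixes V :: "real \<Rightarrow> nat \<Rightarrow> cmat" and H :: "nat \<Rightarrow> nat \<Rightarrow> nat \<Rightarrow> complex"
  assumes a0: "a0 \<in> idxs (tdims m d1 d2)"
    and der: "\<And>p a b. p < m \<Longrightarrow> a < d1 p \<Longrightarrow> b < d2 p \<Longrightarrow> ((\<lambda>s. V s p a b) has_vector_derivative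
       factor_rhs (d1 p) (d2 p) (B j p) \<kappa>1 \<kappa>2 (H (2*p)) (H (2*p+1)) (V t p) a b) (at t within S)"
  shows "((\<lambda>s. mtensor m (V s) a0) has_vector_derivative
           mode_rhs (tdims m d1 d2) \<kappa>1 \<kappa>2 (free_flow m B j) H (mtensor m (V t)) a0) (at t within S)"
proof -
  let ?D = "tdims m d1 d2"
  let ?W = "mtensor m (V t)"
  let ?P = "\<lambda>q. \<Prod>l\<in>{..<m}-{q}. V t l (a0!(2*l)) (a0!(2*l+1))"
  let ?R = "\<lambda>p. factor_rhs (d1 p) (d2 p) (B j p) \<kappa>1 \<kappa>2 (H (2*p)) (H (2*p+1)) (V t p)
                 (a0!(2*p)) (a0!(2*p+1))"
  have la0: "length a0 = 2*m" using idxs_length[OF a0] by simp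
  have bnd: "a0!(2*p) < d1 p" "a0!(2*p+1) < d2 p" if "p < m" for p
    using idxs_nth[OF a0, of "2*p"] idxs_nth[OF a0, of "2*p+1"] that by auto
  have "((\<lambda>s. mtensor m (V s) a0) has_vector_derivative (\<Sum>q<m. ?R q * ?P q)) (at t within S)"
    by (rule has_vector_derivative_mtensor) (use der bnd in auto)
  moreover have "(\<Sum>q<m. ?R q * ?P q) = mode_rhs ?D \<kappa>1 \<kappa>2 (free_flow m B j) H ?W a0"
  proof -
    have e1: "?W (a0[2*q := c]) = V t q c (a0!(2*q+1)) * ?P q" if "q < m" for q c
      using mtensor_split_factor[OF that, of "a0[2*q := c]" a0 "V t"] that la0 by (auto simp: nth_list_update)
    have e2: "?W (a0[2*q+1 := c]) = V t q (a0!(2*q)) c * ?P q" if "q < m" for q c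
      using mtensor_split_factor[OF that, of "a0[2*q+1 := c]" a0 "V t"] that la0 by (auto simp: nth_list_update)
    have e3: "?W (a0[2*q := c, 2*q+1 := d]) = V t q c d * ?P q" if "q < m" for q c d
      using mtensor_split_factor[OF that, of "a0[2*q := c, 2*q+1 := d]" a0 "V t"] that la0 by (auto simp: nth_list_update)
    have "mode_rhs ?D \<kappa>1 \<kappa>2 (free_flow m B j) H ?W a0
      = (\<Sum>k<m. \<Sum>c<d1 k. \<Sum>d<d2 k. B j k (a0!(2*k)) (a0!(2*k+1)) c d * ?W (a0[2*k := c, 2*k+1 := d]))
        + (\<Sum>q<m. of_real \<kappa>1 * (\<Sum>c<d1 q. H (2*q) (a0!(2*q)) c * ?W (a0[2*q := c]))
                 + of_real \<kappa>2 * (\<Sum>c<d2 q. H (2*q+1) (a0!(2*q+1)) c * ?W (a0[2*q+1 := c])))"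
      unfolding mode_rhs_def sum_free_flow[OF a0] length_tdims sum_lessThan_double
      by (intro arg_cong2[where f="(+)"] refl sum.cong) (auto simp: kappa_mode_def)
    also have "\<dots> = (\<Sum>q<m. (\<Sum>c<d1 q. \<Sum>d<d2 q. B j q (a0!(2*q)) (a0!(2*q+1)) c d * V t q c d * ?P q)
        + (of_real \<kappa>1 * (\<Sum>c<d1 q. H (2*q) (a0!(2*q)) c * V t q c (a0!(2*q+1)) * ?P q)
           + of_real \<kappa>2 * (\<Sum>c<d2 q. H (2*q+1) (a0!(2*q+1)) c * V t q (a0!(2*q)) c * ?P q)))"
      unfolding sum.distrib[symmetric]
      by (rule sum.cong[OF refl]) (simp add: e1 e2[simplified] e3[simplified] mult.assoc)
    also have "\<dots> = (\<Sum>q<m. ?R q * ?P q)"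
      by (rule sum.cong[OF refl]) (simp add: factor_rhs_def apply4_def sum_distrib_right sum_distrib_left algebra_simps)
    finally show ?thesis by simp
  qed
  ultimately show ?thesis by simp
qed

section \<open>Product tensors\<close>

definition frob_inner_others ::
  "nat \<Rightarrow> (nat \<Rightarrow> nat) \<Rightarrow> (nat \<Rightarrow> nat) \<Rightarrow> (nat \<Rightarrow> cmat) \<Rightarrow> (nat \<Rightarrow> cmat) \<Rightarrow> nat \<Rightarrow> complex" where
  "frob_inner_others m d1 d2 X Y p = (\<Prod>l\<in>{..<m}-{p}. frob_inner (d1 l) (d2 l) (X l) (Y l))"

lemma sum_idxs_tdims_prod_remove:
  fixes F :: "nat \<Rightarrow> nat \<Rightarrow> 'a::comm_semiring_1"
  assumes q: "q < m"
  shows "(\<Sum>a\<in>idxs (tdims m d1 d2). F (a!(2*q)) (a!(2*q+1)) * (\<Prod>p\<in>{..<m}-{q}. g p (a!(2*p)) (a!(2*p+1))))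
       = (\<Sum>x<d1 q. \<Sum>y<d2 q. F x y) * (\<Prod>p\<in>{..<m}-{q}. \<Sum>x<d1 p. \<Sum>y<d2 p. g p x y)"
proof -
  define g' where "g' p = (if p = q then F else g p)" for p
  have split: "(\<Prod>p<m. h p (g' p)) = h q F * (\<Prod>p\<in>{..<m}-{q}. h p (g p))"
    for h :: "nat \<Rightarrow> (nat \<Rightarrow> nat \<Rightarrow> 'a) \<Rightarrow> 'a"
    using prod.remove[of "{..<m}" q "\<lambda>p. h p (g' p)"] q by (simp add: g'_def)
  have "(\<Sum>a\<in>idxs (tdims m d1 d2). \<Prod>p<m. g' p (a!(2*p)) (a!(2*p+1)))
      = (\<Prod>p<m. \<Sum>x<d1 p. \<Sum>y<d2 p. g' p x y)"
    by (rule sum_idxs_tdims_prod)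
  then show ?thesis
    unfolding split[of "\<lambda>p G. G (_!(2*p)) (_!(2*p+1))"] split[of "\<lambda>p G. \<Sum>x<d1 p. \<Sum>y<d2 p. G x y"]
    by simp
qed

lemma sum_mtensor_row_contraction:
  fixes X Y :: "nat \<Rightarrow> cmat"
  assumes q: "q < m" and c: "c < d1 q"
  shows "(\<Sum>a1\<in>{a1\<in>idxs (tdims m d1 d2). a1!(2*q) = c}. mtensor m Y (a1[2*q:=a]) * cnj (mtensor m X a1))
       = frob_inner_others m d1 d2 X Y q * (\<Sum>y<d2 q. Y q a y * cnj (X q c y))"
proof -
  let ?G = "\<lambda>a1. \<Prod>l\<in>{..<m}-{q}. Y l (a1!(2*l)) (a1!(2*l+1)) * cnj (X l (a1!(2*l)) (a1!(2*l+1)))"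
  have summand: "(if a1!(2*q) = c then mtensor m Y (a1[2*q:=a]) * cnj (mtensor m X a1) else 0)
      = (if a1!(2*q) = c then Y q a (a1!(2*q+1)) * cnj (X q c (a1!(2*q+1))) else 0) * ?G a1"
    if "a1 \<in> idxs (tdims m d1 d2)" for a1
  proof -
    have "length a1 = 2*m" using idxs_length[OF that] by simp
    then have "mtensor m Y (a1[2*q:=a]) = Y q a (a1!(2*q+1)) * (\<Prod>l\<in>{..<m}-{q}. Y l (a1!(2*l)) (a1!(2*l+1)))"
      using mtensor_split_factor[OF q, of "a1[2*q:=a]" a1 Y] q by (auto simp: nth_list_update)
    moreover have "mtensor m X a1 = X q (a1!(2*q)) (a1!(2*q+1)) * (\<Prod>l\<in>{..<m}-{q}. X l (a1!(2*l)) (a1!(2*l+1)))"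
      using mtensor_split_factor[OF q, of a1 a1 X] by auto
    ultimately show ?thesis by (simp add: prod.distrib)
  qed
  have "(\<Sum>a1\<in>{a1\<in>idxs (tdims m d1 d2). a1!(2*q) = c}. mtensor m Y (a1[2*q:=a]) * cnj (mtensor m X a1))
      = (\<Sum>a1\<in>idxs (tdims m d1 d2). if a1!(2*q) = c then mtensor m Y (a1[2*q:=a]) * cnj (mtensor m X a1) else 0)"
    by (rule sum.inter_filter) simp
  also have "\<dots> = (\<Sum>a1\<in>idxs (tdims m d1 d2).
           (if a1!(2*q) = c then Y q a (a1!(2*q+1)) * cnj (X q c (a1!(2*q+1))) else 0) * ?G a1)"
    by (rule sum.cong[OF refl summand])
  also have "\<dots> = (\<Sum>x<d1 q. \<Sum>y<d2 q. if x = c then Y q a y * cnj (X q c y) else 0)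
      * (\<Prod>l\<in>{..<m}-{q}. \<Sum>x<d1 l. \<Sum>y<d2 l. Y l x y * cnj (X l x y))"
    by (rule sum_idxs_tdims_prod_remove[OF q])
  also have "(\<Sum>x<d1 q. \<Sum>y<d2 q. if x = c then Y q a y * cnj (X q c y) else 0)
      = (\<Sum>y<d2 q. Y q a y * cnj (X q c y))"
    by (subst sum.swap) (simp add: c)
  also have "(\<Prod>l\<in>{..<m}-{q}. \<Sum>x<d1 l. \<Sum>y<d2 l. Y l x y * cnj (X l x y)) = frob_inner_others m d1 d2 X Y q"
    by (simp add: frob_inner_others_def frob_inner_def mult.commute)
  finally show ?thesis by (simp add: mult.commute)
qed

lemma sum_mtensor_col_contraction:
  fixes X Y :: "nat \<Rightarrow> cmat"
  assumes q: "q < m" and c: "c < d2 q"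
  shows "(\<Sum>a1\<in>{a1\<in>idxs (tdims m d1 d2). a1!(2*q+1) = c}. mtensor m Y (a1[2*q+1:=b]) * cnj (mtensor m X a1))
       = frob_inner_others m d1 d2 X Y q * (\<Sum>x<d1 q. Y q x b * cnj (X q x c))"
proof -
  let ?G = "\<lambda>a1. \<Prod>l\<in>{..<m}-{q}. Y l (a1!(2*l)) (a1!(2*l+1)) * cnj (X l (a1!(2*l)) (a1!(2*l+1)))"
  have summand: "(if a1!(2*q+1) = c then mtensor m Y (a1[2*q+1:=b]) * cnj (mtensor m X a1) else 0)
      = (if a1!(2*q+1) = c then Y q (a1!(2*q)) b * cnj (X q (a1!(2*q)) c) else 0) * ?G a1"
    if "a1 \<in> idxs (tdims m d1 d2)" for a1
  proof -
    have "length a1 = 2*m" using idxs_length[OF that] by simp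
    then have "mtensor m Y (a1[2*q+1:=b]) = Y q (a1!(2*q)) b * (\<Prod>l\<in>{..<m}-{q}. Y l (a1!(2*l)) (a1!(2*l+1)))"
      using mtensor_split_factor[OF q, of "a1[2*q+1:=b]" a1 Y] q by (auto simp: nth_list_update)
    moreover have "mtensor m X a1 = X q (a1!(2*q)) (a1!(2*q+1)) * (\<Prod>l\<in>{..<m}-{q}. X l (a1!(2*l)) (a1!(2*l+1)))"
      using mtensor_split_factor[OF q, of a1 a1 X] by auto
    ultimately show ?thesis by (simp add: prod.distrib)
  qed
  have "(\<Sum>a1\<in>{a1\<in>idxs (tdims m d1 d2). a1!(2*q+1) = c}. mtensor m Y (a1[2*q+1:=b]) * cnj (mtensor m X a1))
      = (\<Sum>a1\<in>idxs (tdims m d1 d2). if a1!(2*q+1) = c then mtensor m Y (a1[2*q+1:=b]) * cnj (mtensor m X a1) else 0)"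
    by (rule sum.inter_filter) simp
  also have "\<dots> = (\<Sum>a1\<in>idxs (tdims m d1 d2).
           (if a1!(2*q+1) = c then Y q (a1!(2*q)) b * cnj (X q (a1!(2*q)) c) else 0) * ?G a1)"
    by (rule sum.cong[OF refl summand])
  also have "\<dots> = (\<Sum>x<d1 q. \<Sum>y<d2 q. if y = c then Y q x b * cnj (X q x c) else 0)
      * (\<Prod>l\<in>{..<m}-{q}. \<Sum>x<d1 l. \<Sum>y<d2 l. Y l x y * cnj (X l x y))"
    by (rule sum_idxs_tdims_prod_remove[OF q])
  also have "\<dots> = (\<Sum>x<d1 q. Y q x b * cnj (X q x c)) * frob_inner_others m d1 d2 X Y q"
    using c by (simp add: sum.delta frob_inner_others_def frob_inner_def mult.commute)
  finally show ?thesis by (simp add: mult.commute)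
qed

definition mm_coupling_row :: "nat \<Rightarrow> nat \<Rightarrow> (nat \<Rightarrow> nat) \<Rightarrow> (nat \<Rightarrow> nat) \<Rightarrow> (nat \<Rightarrow> nat \<Rightarrow> cmat) \<Rightarrow> nat
   \<Rightarrow> nat \<Rightarrow> nat \<Rightarrow> nat \<Rightarrow> complex" where
  "mm_coupling_row N m d1 d2 U j q a c =
     (\<Sum>k<N. frob_inner_others m d1 d2 (U j) (U k) q * (\<Sum>y<d2 q. U k q a y * cnj (U j q c y))
           - frob_inner_others m d1 d2 (U k) (U j) q * (\<Sum>y<d2 q. U j q a y * cnj (U k q c y))) / of_nat N"

definition mm_coupling_col :: "nat \<Rightarrow> nat \<Rightarrow> (nat \<Rightarrow> nat) \<Rightarrow> (nat \<Rightarrow> nat) \<Rightarrow> (nat \<Rightarrow> nat \<Rightarrow> cmat) \<Rightarrow> nat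
   \<Rightarrow> nat \<Rightarrow> nat \<Rightarrow> nat \<Rightarrow> complex" where
  "mm_coupling_col N m d1 d2 U j q b c =
     (\<Sum>k<N. frob_inner_others m d1 d2 (U j) (U k) q * (\<Sum>x<d1 q. U k q x b * cnj (U j q x c))
           - frob_inner_others m d1 d2 (U k) (U j) q * (\<Sum>x<d1 q. U j q x b * cnj (U k q x c))) / of_nat N"

definition mm_coupling :: "nat \<Rightarrow> nat \<Rightarrow> (nat \<Rightarrow> nat) \<Rightarrow> (nat \<Rightarrow> nat) \<Rightarrow> (nat \<Rightarrow> nat \<Rightarrow> cmat) \<Rightarrow> nat
   \<Rightarrow> nat \<Rightarrow> nat \<Rightarrow> nat \<Rightarrow> complex" where
  "mm_coupling N m d1 d2 U j r =
     (if even r then mm_coupling_row N m d1 d2 U j (r div 2) else mm_coupling_col N m d1 d2 U j (r div 2))"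

lemma mode_coupling_centroid:
  fixes U :: "nat \<Rightarrow> nat \<Rightarrow> cmat"
  assumes T: "\<And>k a. k < N \<Longrightarrow> a \<in> idxs D \<Longrightarrow> T k a = mtensor m (U k) a"
    and r: "r < length D" and a: "a < D!r"
    and XS: "\<And>k. (\<Sum>a1\<in>{a1\<in>idxs D. a1!r = c}. mtensor m (U k) (a1[r:=a]) * cnj (mtensor m (U j) a1)) = F k"
    and YS: "\<And>k. (\<Sum>a1\<in>{a1\<in>idxs D. a1!r = c}. mtensor m (U j) (a1[r:=a]) * cnj (mtensor m (U k) a1)) = G k"
    and j: "j < N"
  shows "mode_coupling D (T j) (\<lambda>a. (\<Sum>k<N. T k a) / of_nat N) r a c = (\<Sum>k<N. F k - G k) / of_nat N"
proof -
  let ?S = "{a1\<in>idxs D. a1!r = c}"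
  have "mode_coupling D (T j) (\<lambda>a. (\<Sum>k<N. T k a) / of_nat N) r a c
      = (\<Sum>a1\<in>?S. (\<Sum>k<N. mtensor m (U k) (a1[r:=a]) * cnj (mtensor m (U j) a1)
                          - mtensor m (U j) (a1[r:=a]) * cnj (mtensor m (U k) a1)) / of_nat N)"
    unfolding mode_coupling_def
  proof (rule sum.cong[OF refl])
    fix a1 assume "a1 \<in> ?S"
    then have a1: "a1 \<in> idxs D" "a1[r:=a] \<in> idxs D" using idxs_list_update[of a1 D a r] a by auto
    show "(\<Sum>k<N. T k (a1[r := a])) / of_nat N * cnj (T j a1) - T j (a1[r := a]) * cnj ((\<Sum>k<N. T k a1) / of_nat N)
        = (\<Sum>k<N. mtensor m (U k) (a1[r:=a]) * cnj (mtensor m (U j) a1)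
                          - mtensor m (U j) (a1[r:=a]) * cnj (mtensor m (U k) a1)) / of_nat N"
    proof -
      have e1: "(\<Sum>k<N. T k (a1[r := a])) / of_nat N * cnj (T j a1)
          = (\<Sum>k<N. mtensor m (U k) (a1[r:=a]) * cnj (mtensor m (U j) a1)) / of_nat N"
        using a1 j by (simp add: T sum_distrib_right)
      have e2: "T j (a1[r := a]) * cnj ((\<Sum>k<N. T k a1) / of_nat N)
          = (\<Sum>k<N. mtensor m (U j) (a1[r:=a]) * cnj (mtensor m (U k) a1)) / of_nat N"
        using a1 j by (simp add: T sum_distrib_left)
      show ?thesis unfolding e1 e2 sum_subtractf diff_divide_distrib ..
    qed
  qed
  also have "\<dots> = (\<Sum>k<N. (\<Sum>a1\<in>?S. mtensor m (U k) (a1[r:=a]) * cnj (mtensor m (U j) a1))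
                        - (\<Sum>a1\<in>?S. mtensor m (U j) (a1[r:=a]) * cnj (mtensor m (U k) a1))) / of_nat N"
    by (simp add: sum_divide_distrib[symmetric] sum_subtractf sum.swap[of _ ?S])
  also have "\<dots> = (\<Sum>k<N. F k - G k) / of_nat N" by (simp add: XS YS)
  finally show ?thesis .
qed

lemma mode_coupling_mtensor:
  fixes U :: "nat \<Rightarrow> nat \<Rightarrow> cmat"
  assumes T: "\<And>k a. k < N \<Longrightarrow> a \<in> idxs (tdims m d1 d2) \<Longrightarrow> T k a = mtensor m (U k) a"
    and r: "r < 2*m" and a: "a < tdims m d1 d2 ! r" and c: "c < tdims m d1 d2 ! r" and j: "j < N"
  shows "mode_coupling (tdims m d1 d2) (T j) (\<lambda>a. (\<Sum>k<N. T k a) / of_nat N) r a c = mm_coupling N m d1 d2 U j r a c"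
proof (cases "even r")
  case True
  then obtain q where q: "r = 2*q" by blast
  have qm: "q < m" using r q by simp
  have X: "(\<Sum>a1\<in>{a1\<in>idxs (tdims m d1 d2). a1!r = c}. mtensor m (U k) (a1[r:=a]) * cnj (mtensor m (U j) a1))
      = frob_inner_others m d1 d2 (U j) (U k) q * (\<Sum>y<d2 q. U k q a y * cnj (U j q c y))" for k
    unfolding q by (rule sum_mtensor_row_contraction) (use qm a c q in simp_all)
  have Y: "(\<Sum>a1\<in>{a1\<in>idxs (tdims m d1 d2). a1!r = c}. mtensor m (U j) (a1[r:=a]) * cnj (mtensor m (U k) a1))
      = frob_inner_others m d1 d2 (U k) (U j) q * (\<Sum>y<d2 q. U j q a y * cnj (U k q c y))" for k
    unfolding q by (rule sum_mtensor_row_contraction) (use qm a c q in simp_all)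
  have "mode_coupling (tdims m d1 d2) (T j) (\<lambda>a. (\<Sum>k<N. T k a) / of_nat N) r a c
     = (\<Sum>k<N. frob_inner_others m d1 d2 (U j) (U k) q * (\<Sum>y<d2 q. U k q a y * cnj (U j q c y))
          - frob_inner_others m d1 d2 (U k) (U j) q * (\<Sum>y<d2 q. U j q a y * cnj (U k q c y))) / of_nat N"
    by (rule mode_coupling_centroid[where F="\<lambda>k. frob_inner_others m d1 d2 (U j) (U k) q * (\<Sum>y<d2 q. U k q a y * cnj (U j q c y))"
          and G="\<lambda>k. frob_inner_others m d1 d2 (U k) (U j) q * (\<Sum>y<d2 q. U j q a y * cnj (U k q c y))", OF T _ a X Y j]) (use r in simp_all)
  then show ?thesis using True q by (simp add: mm_coupling_def mm_coupling_row_def)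
next
  case False
  then obtain q where q: "r = 2*q+1" by (metis oddE)
  have qm: "q < m" using r q by simp
  have X: "(\<Sum>a1\<in>{a1\<in>idxs (tdims m d1 d2). a1!r = c}. mtensor m (U k) (a1[r:=a]) * cnj (mtensor m (U j) a1))
      = frob_inner_others m d1 d2 (U j) (U k) q * (\<Sum>x<d1 q. U k q x a * cnj (U j q x c))" for k
    unfolding q by (rule sum_mtensor_col_contraction) (use qm a c q in simp_all)
  have Y: "(\<Sum>a1\<in>{a1\<in>idxs (tdims m d1 d2). a1!r = c}. mtensor m (U j) (a1[r:=a]) * cnj (mtensor m (U k) a1))
      = frob_inner_others m d1 d2 (U k) (U j) q * (\<Sum>x<d1 q. U j q x a * cnj (U k q x c))" for k
    unfolding q by (rule sum_mtensor_col_contraction) (use qm a c q in simp_all)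
  have "mode_coupling (tdims m d1 d2) (T j) (\<lambda>a. (\<Sum>k<N. T k a) / of_nat N) r a c
     = (\<Sum>k<N. frob_inner_others m d1 d2 (U j) (U k) q * (\<Sum>x<d1 q. U k q x a * cnj (U j q x c))
          - frob_inner_others m d1 d2 (U k) (U j) q * (\<Sum>x<d1 q. U j q x a * cnj (U k q x c))) / of_nat N"
    by (rule mode_coupling_centroid[where F="\<lambda>k. frob_inner_others m d1 d2 (U j) (U k) q * (\<Sum>x<d1 q. U k q x a * cnj (U j q x c))"
          and G="\<lambda>k. frob_inner_others m d1 d2 (U k) (U j) q * (\<Sum>x<d1 q. U j q x a * cnj (U k q x c))", OF T _ a X Y j]) (use r in simp_all)
  then show ?thesis using False q by (simp add: mm_coupling_def mm_coupling_col_def)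
qed

lemma sum_divide_swap:
  fixes F :: "'k \<Rightarrow> 'c \<Rightarrow> complex"
  shows "(\<Sum>c\<in>C. ((\<Sum>k\<in>K. F k c) / n) * G c) = (\<Sum>k\<in>K. \<Sum>c\<in>C. F k c * G c) / n"
proof -
  have "(\<Sum>c\<in>C. ((\<Sum>k\<in>K. F k c) / n) * G c) = (\<Sum>c\<in>C. \<Sum>k\<in>K. F k c * G c / n)"
    by (simp add: sum_divide_distrib sum_distrib_right)
  also have "\<dots> = (\<Sum>k\<in>K. \<Sum>c\<in>C. F k c * G c / n)" by (rule sum.swap)
  also have "\<dots> = (\<Sum>k\<in>K. \<Sum>c\<in>C. F k c * G c) / n" by (simp add: sum_divide_distrib)
  finally show ?thesis .
qed

lemma sum_mult_swap:
  fixes F :: "'x \<Rightarrow> 'c \<Rightarrow> complex"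
  shows "(\<Sum>c\<in>C. (\<Sum>x\<in>X. F x c) * G c) = (\<Sum>x\<in>X. \<Sum>c\<in>C. F x c * G c)"
  by (simp add: sum_distrib_right) (rule sum.swap)

lemma mm_rhs_eq_factor_rhs:
  "mm_rhs N m d1 d2 \<kappa>1 \<kappa>2 B U j p a b
    = factor_rhs (d1 p) (d2 p) (B j p) \<kappa>1 \<kappa>2 (mm_coupling_row N m d1 d2 U j p)
        (mm_coupling_col N m d1 d2 U j p) (U j p) a b"
proof -
  let ?P = "\<lambda>j k. frob_inner_others m d1 d2 (U j) (U k) p"
  let ?mm = "\<lambda>X Y Z. mat_mult (d1 p) (mat_mult (d2 p) X (adj Y)) Z"
  have P: "(\<lambda>j k. \<Prod>l\<in>{..<m} - {p}. frob_inner (d1 l) (d2 l) (U j l) (U k l)) = ?P"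
    by (simp add: frob_inner_others_def)
  have mm: "?mm X Y Z a b = (\<Sum>c<d1 p. (\<Sum>y<d2 p. X a y * cnj (Y c y)) * Z c b)" for X Y Z
    by (simp add: mat_mult_def adj_def)
  have k1: "(\<Sum>c<d1 p. mm_coupling_row N m d1 d2 U j p a c * U j p c b)
      = (\<Sum>k<N. ?P j k * ?mm (U k p) (U j p) (U j p) a b - ?P k j * ?mm (U j p) (U k p) (U j p) a b) / of_nat N"
    unfolding mm_coupling_row_def sum_divide_swap mm
    by (simp only: sum_subtractf left_diff_distrib mult.assoc sum_distrib_left[symmetric])
  have k2: "(\<Sum>c<d2 p. mm_coupling_col N m d1 d2 U j p b c * U j p a c)
      = (\<Sum>k<N. ?P j k * ?mm (U j p) (U j p) (U k p) a b - ?P k j * ?mm (U j p) (U k p) (U j p) a b) / of_nat N"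
  proof -
    have s1: "(\<Sum>c<d2 p. (\<Sum>x<d1 p. U k p x b * cnj (U j p x c)) * U j p a c)
        = (\<Sum>x<d1 p. (\<Sum>y<d2 p. U j p a y * cnj (U j p x y)) * U k p x b)" for k
      unfolding sum_mult_swap by (rule trans[OF sum.swap]) (simp add: mult_ac)
    have s2: "(\<Sum>c<d2 p. (\<Sum>x<d1 p. U j p x b * cnj (U k p x c)) * U j p a c)
        = (\<Sum>x<d1 p. (\<Sum>y<d2 p. U j p a y * cnj (U k p x y)) * U j p x b)" for k
      unfolding sum_mult_swap by (rule trans[OF sum.swap]) (simp add: mult_ac)
    show ?thesis
      unfolding mm_coupling_col_def sum_divide_swap mm
      by (simp add: sum_subtractf left_diff_distrib mult.assoc sum_distrib_left[symmetric] s1 s2)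
  qed
  show ?thesis
    unfolding mm_rhs_def factor_rhs_def Let_def P k1 k2
    by (simp add: sum_subtractf[symmetric] of_real_divide)
qed

lemma mode_rhs_cong:
  assumes a0: "a0 \<in> idxs D"
    and H: "\<And>r a c. r < length D \<Longrightarrow> a < D!r \<Longrightarrow> c < D!r \<Longrightarrow> H r a c = H' r a c"
    and X: "\<And>a. a \<in> idxs D \<Longrightarrow> X a = X' a"
  shows "mode_rhs D \<kappa>1 \<kappa>2 A H X a0 = mode_rhs D \<kappa>1 \<kappa>2 A H' X' a0"
  unfolding mode_rhs_def
  by (intro arg_cong2[where f="(+)"] sum.cong refl arg_cong2[where f="(*)"])
     (auto simp: X H idxs_nth[OF a0] idxs_list_update[OF a0])

section \<open>Tensor products of matrix model solutions\<close>

definition factor_generator ::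
  "(nat \<Rightarrow> nat \<Rightarrow> nat \<Rightarrow> nat \<Rightarrow> complex) \<Rightarrow> real \<Rightarrow> real \<Rightarrow> (nat \<Rightarrow> nat \<Rightarrow> complex)
   \<Rightarrow> (nat \<Rightarrow> nat \<Rightarrow> complex) \<Rightarrow> nat \<times> nat \<Rightarrow> nat \<times> nat \<Rightarrow> complex" where
  "factor_generator Bp \<kappa>1 \<kappa>2 H1 H2 x y = (case x of (a, b) \<Rightarrow> case y of (c, d) \<Rightarrow>
      Bp a b c d + of_real \<kappa>1 * (if d = b then H1 a c else 0) + of_real \<kappa>2 * (if c = a then H2 b d else 0))"

lemma sum_factor_generator:
  assumes "a < n1" "b < n2"
  shows "(\<Sum>y\<in>{..<n1} \<times> {..<n2}. factor_generator Bp \<kappa>1 \<kappa>2 H1 H2 (a, b) y * X (fst y) (snd y))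
       = factor_rhs n1 n2 Bp \<kappa>1 \<kappa>2 H1 H2 X a b"
proof -
  have delta: "(\<Sum>c<n1. \<Sum>d<n2. if c = a then H2 b d * X a d else 0) = (\<Sum>d<n2. H2 b d * X a d)"
    using assms(1) by (subst sum.swap) simp
  have "(\<Sum>y\<in>{..<n1} \<times> {..<n2}. factor_generator Bp \<kappa>1 \<kappa>2 H1 H2 (a, b) y * X (fst y) (snd y))
      = (\<Sum>c<n1. \<Sum>d<n2. Bp a b c d * X c d + of_real \<kappa>1 * ((if d = b then H1 a c else 0) * X c d)
            + of_real \<kappa>2 * ((if c = a then H2 b d else 0) * X c d))"
    by (simp add: sum.cartesian_product' factor_generator_def algebra_simps)
  also have "\<dots> = factor_rhs n1 n2 Bp \<kappa>1 \<kappa>2 H1 H2 X a b"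
    using assms
    by (simp add: delta factor_rhs_def sum.distrib apply4_def sum_distrib_left[symmetric]
        if_distrib[of "\<lambda>z. z * _"] sum.delta sum.swap[of _ "{..<n1}" "{..<n2}"] cong: if_cong)
  finally show ?thesis .
qed

lemma factor_generator_skew:
  assumes B: "\<And>a1 b1 a2 b2. a1 < n1 \<Longrightarrow> b1 < n2 \<Longrightarrow> a2 < n1 \<Longrightarrow> b2 < n2 \<Longrightarrow>
                Bp a1 b1 a2 b2 = - cnj (Bp a2 b2 a1 b1)"
    and H1: "\<And>a c. H1 a c = - cnj (H1 c a)" and H2: "\<And>b d. H2 b d = - cnj (H2 d b)"
    and x: "x \<in> {..<n1} \<times> {..<n2}" and y: "y \<in> {..<n1} \<times> {..<n2}"
  shows "factor_generator Bp \<kappa>1 \<kappa>2 H1 H2 x y = - cnj (factor_generator Bp \<kappa>1 \<kappa>2 H1 H2 y x)"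
proof -
  obtain a b c d where xy: "x = (a, b)" "y = (c, d)" by (cases x, cases y)
  have "cnj (Bp c d a b) = - Bp a b c d" using B[of a b c d] x y xy by auto
  moreover have "cnj (H1 c a) = - H1 a c" "cnj (H2 d b) = - H2 b d"
    using H1[of a c] H2[of b d] by auto
  ultimately show ?thesis unfolding xy factor_generator_def by (simp add: algebra_simps)
qed

lemma cnj_frob_inner_others: "cnj (frob_inner_others m d1 d2 X Y p) = frob_inner_others m d1 d2 Y X p"
  by (simp add: frob_inner_others_def frob_inner_def mult.commute)

lemma mm_coupling_row_skew: "mm_coupling_row N m d1 d2 U j p a c = - cnj (mm_coupling_row N m d1 d2 U j p c a)"
  by (simp add: mm_coupling_row_def cnj_frob_inner_others sum_subtractf diff_divide_distrib mult.commute)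

lemma mm_coupling_col_skew: "mm_coupling_col N m d1 d2 U j p b d = - cnj (mm_coupling_col N m d1 d2 U j p d b)"
  by (simp add: mm_coupling_col_def cnj_frob_inner_others sum_subtractf diff_divide_distrib mult.commute)

lemma frob_norm_eq_sqrt_sum: "frob_norm n1 n2 X = sqrt (\<Sum>x\<in>{..<n1} \<times> {..<n2}. (cmod (X (fst x) (snd x)))^2)"
  by (simp add: frob_norm_def sum.cartesian_product')

text \<open>Each factor evolves under the generator \<open>factor_generator\<close>, which is skew-Hermitian
  because \<open>B\<close> is and because the coupling matrices are differences of a matrix and its adjoint.\<close>
lemma mm_solution_frob_norm_const:
  assumes sol: "mm_solution N m d1 d2 \<kappa>1 \<kappa>2 B U"
    and skew: "\<forall>j<N. \<forall>p<m. \<forall>a1<d1 p. \<forall>b1<d2 p. \<forall>a2<d1 p. \<forall>b2<d2 p.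
           B j p a1 b1 a2 b2 = - cnj (B j p a2 b2 a1 b1)"
    and j: "j < N" and p: "p < m" and t: "0 \<le> t"
  shows "frob_norm (d1 p) (d2 p) (U j p t) = frob_norm (d1 p) (d2 p) (U j p 0)"
proof -
  let ?I = "{..<d1 p} \<times> {..<d2 p}"
  let ?K = "\<lambda>s. factor_generator (B j p) \<kappa>1 \<kappa>2 (mm_coupling_row N m d1 d2 (\<lambda>j' p'. U j' p' s) j p)
                 (mm_coupling_col N m d1 d2 (\<lambda>j' p'. U j' p' s) j p)"
  have "(\<Sum>x\<in>?I. (cmod (U j p t (fst x) (snd x)))^2) = (\<Sum>x\<in>?I. (cmod (U j p 0 (fst x) (snd x)))^2)"
  proof (rule skew_hermitian_ode_sum_cmod_power2_const[where K = ?K])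
    fix s :: real and x assume s: "0 \<le> s" and x: "x \<in> ?I"
    obtain a b where ab: "x = (a, b)" by (cases x)
    have "((\<lambda>s. U j p s a b) has_vector_derivative mm_rhs N m d1 d2 \<kappa>1 \<kappa>2 B (\<lambda>j' p'. U j' p' s) j p a b)
        (at s within {0..})"
      using sol j p s x ab unfolding mm_solution_def by auto
    then show "((\<lambda>s. U j p s (fst x) (snd x)) has_vector_derivative
        (\<Sum>y\<in>?I. ?K s x y * U j p s (fst y) (snd y))) (at s within {0..})"
      using x ab by (simp add: sum_factor_generator mm_rhs_eq_factor_rhs)
  next
    fix s :: real and x y assume x: "x \<in> ?I" and y: "y \<in> ?I"
    have Bp: "B j p a1 b1 a2 b2 = - cnj (B j p a2 b2 a1 b1)"
      if "a1 < d1 p" "b1 < d2 p" "a2 < d1 p" "b2 < d2 p" for a1 b1 a2 b2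
      using skew j p that by blast
    show "?K s x y = - cnj (?K s y x)"
      by (rule factor_generator_skew[OF Bp mm_coupling_row_skew mm_coupling_col_skew x y])
  qed (use t in auto)
  then show ?thesis by (simp add: frob_norm_eq_sqrt_sum)
qed

lemma lohe_solution_mtensor:
  assumes sol: "mm_solution N m d1 d2 \<kappa>1 \<kappa>2 B U"
  shows "lohe_solution N (tdims m d1 d2) (kappa_coupling m \<kappa>1 \<kappa>2) (free_flow m B)
            (\<lambda>i t. mtensor m (\<lambda>p. U i p t))"
  unfolding lohe_solution_def
proof (intro allI impI ballI)
  fix t :: real and j a0
  assume t: "0 \<le> t" and j: "j < N" and a0: "a0 \<in> idxs (tdims m d1 d2)"
  let ?D = "tdims m d1 d2"
  let ?Ut = "\<lambda>j' p'. U j' p' t"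
  let ?T = "\<lambda>k. mtensor m (?Ut k)"
  have "lohe_rhs ?D (kappa_coupling m \<kappa>1 \<kappa>2) (free_flow m B j) (?T j) (\<lambda>a. (\<Sum>k<N. ?T k a) / of_nat N) a0
      = mode_rhs ?D \<kappa>1 \<kappa>2 (free_flow m B j) (mode_coupling ?D (?T j) (\<lambda>a. (\<Sum>k<N. ?T k a) / of_nat N))
          (?T j) a0"
    by (rule lohe_rhs_eq_mode_rhs[OF a0])
  also have "\<dots> = mode_rhs ?D \<kappa>1 \<kappa>2 (free_flow m B j) (mm_coupling N m d1 d2 ?Ut j) (?T j) a0"
    by (rule mode_rhs_cong[OF a0]) (auto intro!: mode_coupling_mtensor j)
  finally have rhs: "lohe_rhs ?D (kappa_coupling m \<kappa>1 \<kappa>2) (free_flow m B j) (?T j)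
        (\<lambda>a. (\<Sum>k<N. ?T k a) / of_nat N) a0
      = mode_rhs ?D \<kappa>1 \<kappa>2 (free_flow m B j) (mm_coupling N m d1 d2 ?Ut j) (?T j) a0" .
  have "((\<lambda>s. mtensor m ((\<lambda>s p. U j p s) s) a0) has_vector_derivative
      mode_rhs ?D \<kappa>1 \<kappa>2 (free_flow m B j) (mm_coupling N m d1 d2 ?Ut j) (mtensor m ((\<lambda>s p. U j p s) t)) a0)
      (at t within {0..})"
  proof (rule has_vector_derivative_mtensor_mode_rhs[OF a0])
    fix p a b assume "p < m" "a < d1 p" "b < d2 p"
    then have "((\<lambda>s. U j p s a b) has_vector_derivative mm_rhs N m d1 d2 \<kappa>1 \<kappa>2 B ?Ut j p a b) (at t within {0..})"
      using sol t j unfolding mm_solution_def by blast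
    then show "((\<lambda>s. (\<lambda>s p. U j p s) s p a b) has_vector_derivative
        factor_rhs (d1 p) (d2 p) (B j p) \<kappa>1 \<kappa>2 (mm_coupling N m d1 d2 ?Ut j (2*p))
          (mm_coupling N m d1 d2 ?Ut j (2*p+1)) ((\<lambda>s p. U j p s) t p) a b) (at t within {0..})"
      by (simp add: mm_rhs_eq_factor_rhs mm_coupling_def)
  qed
  then show "((\<lambda>s. mtensor m (\<lambda>p. U j p s) a0) has_vector_derivative
      lohe_rhs ?D (kappa_coupling m \<kappa>1 \<kappa>2) (free_flow m B j) (mtensor m (\<lambda>p. U j p t))
        (\<lambda>a. (\<Sum>k<N. mtensor m (\<lambda>p. U k p t) a) / of_nat N) a0) (at t within {0..})"
    using rhs by simp
qed

section \<open>Factorization of Lohe solutions\<close>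

lemma mode_rhs_diff:
  "mode_rhs D \<kappa>1 \<kappa>2 A H X a0 - mode_rhs D \<kappa>1 \<kappa>2 A H Y a0 = mode_rhs D \<kappa>1 \<kappa>2 A H (\<lambda>a. X a - Y a) a0"
  by (simp add: mode_rhs_def sum_subtractf right_diff_distrib algebra_simps)

lemma norm_mode_rhs_le:
  assumes a0: "a0 \<in> idxs D"
  shows "cmod (mode_rhs D \<kappa>1 \<kappa>2 A H X a0)
     \<le> ((\<Sum>a1\<in>idxs D. cmod (A a0 a1)) + (\<Sum>r<length D. \<bar>kappa_mode \<kappa>1 \<kappa>2 r\<bar> * (\<Sum>c<D!r. cmod (H r (a0!r) c))))
        * (\<Sum>b\<in>idxs D. cmod (X b))"
proof -
  let ?S = "\<Sum>b\<in>idxs D. cmod (X b)"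
  have Xb: "cmod (X b) \<le> ?S" if "b \<in> idxs D" for b
    by (rule member_le_sum) (use that in auto)
  have S0: "?S \<ge> 0" by (auto intro: sum_nonneg)
  have 1: "cmod (\<Sum>a1\<in>idxs D. A a0 a1 * X a1) \<le> (\<Sum>a1\<in>idxs D. cmod (A a0 a1)) * ?S"
  proof -
    have "cmod (\<Sum>a1\<in>idxs D. A a0 a1 * X a1) \<le> (\<Sum>a1\<in>idxs D. cmod (A a0 a1) * cmod (X a1))"
      by (rule order_trans[OF norm_sum]) (simp add: norm_mult)
    also have "\<dots> \<le> (\<Sum>a1\<in>idxs D. cmod (A a0 a1) * ?S)"
      by (rule sum_mono, rule mult_left_mono) (use Xb in auto)
    finally show ?thesis by (simp add: sum_distrib_right)
  qed
  have 2: "cmod (\<Sum>r<length D. of_real (kappa_mode \<kappa>1 \<kappa>2 r) * (\<Sum>c<D!r. H r (a0!r) c * X (a0[r:=c])))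
      \<le> (\<Sum>r<length D. \<bar>kappa_mode \<kappa>1 \<kappa>2 r\<bar> * (\<Sum>c<D!r. cmod (H r (a0!r) c))) * ?S"
  proof -
    have "cmod (\<Sum>r<length D. of_real (kappa_mode \<kappa>1 \<kappa>2 r) * (\<Sum>c<D!r. H r (a0!r) c * X (a0[r:=c])))
        \<le> (\<Sum>r<length D. \<bar>kappa_mode \<kappa>1 \<kappa>2 r\<bar> * cmod (\<Sum>c<D!r. H r (a0!r) c * X (a0[r:=c])))"
      by (rule order_trans[OF norm_sum]) (simp add: norm_mult)
    also have "\<dots> \<le> (\<Sum>r<length D. \<bar>kappa_mode \<kappa>1 \<kappa>2 r\<bar> * ((\<Sum>c<D!r. cmod (H r (a0!r) c)) * ?S))"
    proof (rule sum_mono, rule mult_left_mono)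
      fix r assume "r \<in> {..<length D}"
      have "cmod (\<Sum>c<D!r. H r (a0!r) c * X (a0[r:=c])) \<le> (\<Sum>c<D!r. cmod (H r (a0!r) c) * cmod (X (a0[r:=c])))"
        by (rule order_trans[OF norm_sum]) (simp add: norm_mult)
      also have "\<dots> \<le> (\<Sum>c<D!r. cmod (H r (a0!r) c) * ?S)"
        by (rule sum_mono, rule mult_left_mono) (use Xb idxs_list_update[OF a0] in auto)
      finally show "cmod (\<Sum>c<D!r. H r (a0!r) c * X (a0[r:=c])) \<le> (\<Sum>c<D!r. cmod (H r (a0!r) c)) * ?S"
        by (simp add: sum_distrib_right)
    qed simp
    finally show ?thesis by (simp add: sum_distrib_right mult.assoc)
  qed
  show ?thesis
    unfolding mode_rhs_def
    by (rule order_trans[OF norm_triangle_ineq]) (use 1 2 in \<open>simp add: distrib_right\<close>)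
qed
lemma mode_rhs_locally_bounded:
  fixes X :: "real \<Rightarrow> nat list \<Rightarrow> complex"
  assumes Hc: "\<And>r a c. r < length D \<Longrightarrow> a < D!r \<Longrightarrow> continuous_on {0..} (\<lambda>t. H t r a c)"
  shows "\<exists>K. \<forall>t\<in>{0..\<tau>}. \<forall>a\<in>idxs D.
           cmod (mode_rhs D \<kappa>1 \<kappa>2 A (H t) (X t) a) \<le> K * (\<Sum>b\<in>idxs D. cmod (X t b))"
proof -
  define C where "C t a0 = (\<Sum>a1\<in>idxs D. cmod (A a0 a1))
      + (\<Sum>r<length D. \<bar>kappa_mode \<kappa>1 \<kappa>2 r\<bar> * (\<Sum>c<D!r. cmod (H t r (a0!r) c)))" for t a0
  have "continuous_on {0..\<tau>} (\<lambda>t. \<Sum>a0\<in>idxs D. C t a0)"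
  proof (rule continuous_on_sum)
    fix a0 assume a0: "a0 \<in> idxs D"
    have "continuous_on {0..\<tau>} (\<lambda>t. H t r (a0!r) c)" if "r < length D" for r c
      by (rule continuous_on_subset[OF Hc[OF that idxs_nth[OF a0 that]]]) auto
    then show "continuous_on {0..\<tau>} (\<lambda>t. C t a0)"
      unfolding C_def by (intro continuous_intros) auto
  qed
  then obtain K where K: "\<And>t. t \<in> {0..\<tau>} \<Longrightarrow> norm (\<Sum>a0\<in>idxs D. C t a0) \<le> K"
    by (rule continuous_on_compact_bound[rotated]) auto
  have "cmod (mode_rhs D \<kappa>1 \<kappa>2 A (H t) (X t) a0) \<le> K * (\<Sum>b\<in>idxs D. cmod (X t b))"
    if t: "t \<in> {0..\<tau>}" and a0: "a0 \<in> idxs D" for t a0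
  proof -
    have C0: "0 \<le> C t a" for a
      unfolding C_def by (auto intro!: add_nonneg_nonneg sum_nonneg mult_nonneg_nonneg)
    have "C t a0 \<le> (\<Sum>a0\<in>idxs D. C t a0)"
      by (rule member_le_sum) (use a0 C0 in auto)
    also have "\<dots> \<le> K" using K[OF t] by simp
    finally have "C t a0 \<le> K" .
    then show ?thesis
      using norm_mode_rhs_le[OF a0, of \<kappa>1 \<kappa>2 A "H t" "X t"] unfolding C_def[symmetric]
      by (meson mult_right_mono order_trans sum_nonneg norm_ge_zero)
  qed
  then show ?thesis by blast
qed

lemma mode_rhs_ode_unique:
  fixes X Y :: "real \<Rightarrow> nat list \<Rightarrow> complex"
  assumes Hc: "\<And>r a c. r < length D \<Longrightarrow> a < D!r \<Longrightarrow> continuous_on {0..} (\<lambda>t. H t r a c)"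
    and X: "\<And>t a. 0 \<le> t \<Longrightarrow> a \<in> idxs D \<Longrightarrow>
              ((\<lambda>s. X s a) has_vector_derivative mode_rhs D \<kappa>1 \<kappa>2 A (H t) (X t) a) (at t within {0..})"
    and Y: "\<And>t a. 0 \<le> t \<Longrightarrow> a \<in> idxs D \<Longrightarrow>
              ((\<lambda>s. Y s a) has_vector_derivative mode_rhs D \<kappa>1 \<kappa>2 A (H t) (Y t) a) (at t within {0..})"
    and XY0: "\<And>a. a \<in> idxs D \<Longrightarrow> X 0 a = Y 0 a"
    and t: "0 \<le> t" and a: "a \<in> idxs D"
  shows "X t a = Y t a"
proof -
  let ?Z = "\<lambda>t a. X t a - Y t a"
  have "?Z t a = 0"
  proof (rule linearly_bounded_derivative_vanishes[where L = "\<lambda>t. mode_rhs D \<kappa>1 \<kappa>2 A (H t) (?Z t)"])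
    fix t :: real and a assume "0 \<le> t" "a \<in> idxs D"
    then show "((\<lambda>s. ?Z s a) has_vector_derivative mode_rhs D \<kappa>1 \<kappa>2 A (H t) (?Z t) a) (at t within {0..})"
      using has_vector_derivative_diff[OF X[of t a] Y[of t a]] by (simp add: mode_rhs_diff)
  next
    show "\<exists>K. \<forall>t\<in>{0..\<tau>}. \<forall>a\<in>idxs D.
        cmod (mode_rhs D \<kappa>1 \<kappa>2 A (H t) (?Z t) a) \<le> K * (\<Sum>b\<in>idxs D. cmod (?Z t b))" for \<tau>
      by (rule mode_rhs_locally_bounded[OF Hc])
  qed (use XY0 t a in auto)
  then show ?thesis by simp
qed

lemma continuous_on_Ici_if_has_vector_derivative:
  assumes "\<And>t. 0 \<le> t \<Longrightarrow> (f has_vector_derivative f' t) (at t within {0..})"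
  shows "continuous_on {0..} f"
  unfolding continuous_on_eq_continuous_within
  using assms by (auto intro: has_vector_derivative_continuous)

definition lohe_coupling ::
  "nat \<Rightarrow> nat list \<Rightarrow> (nat \<Rightarrow> real \<Rightarrow> nat list \<Rightarrow> complex) \<Rightarrow> nat \<Rightarrow> real \<Rightarrow> nat \<Rightarrow> nat \<Rightarrow> nat \<Rightarrow> complex"
  where "lohe_coupling N D T j t = mode_coupling D (T j t) (\<lambda>a. (\<Sum>k<N. T k t a) / of_nat N)"

lemma continuous_on_lohe_coupling:
  assumes sol: "lohe_solution N D \<kappa> A T" and j: "j < N" and a: "a < D!r"
  shows "continuous_on {0..} (\<lambda>t. lohe_coupling N D T j t r a c)"
  unfolding lohe_coupling_def mode_coupling_def
proof (rule continuous_on_sum)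
  have cT: "continuous_on {0..} (\<lambda>t. T k t a)" if "k < N" "a \<in> idxs D" for k a
    by (rule continuous_on_Ici_if_has_vector_derivative) (use sol that in \<open>auto simp: lohe_solution_def\<close>)
  fix a1 assume "a1 \<in> {a1 \<in> idxs D. a1 ! r = c}"
  then have a1: "a1 \<in> idxs D" "a1[r:=a] \<in> idxs D" using idxs_list_update[of a1 D a r] a by auto
  show "continuous_on {0..} (\<lambda>t. (\<Sum>k<N. T k t (a1[r := a])) / of_nat N * cnj (T j t a1)
        - T j t (a1[r := a]) * cnj ((\<Sum>k<N. T k t a1) / of_nat N))"
    by (intro continuous_intros cT a1 j) (use j in auto)
qed

lemma factor_ode_exists:
  assumes H1: "\<And>a c. a < n1 \<Longrightarrow> continuous_on {0..} (\<lambda>t. H1 t a c)"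
    and H2: "\<And>b d. b < n2 \<Longrightarrow> continuous_on {0..} (\<lambda>t. H2 t b d)"
  shows "\<exists>V. (\<forall>a b. V 0 a b = V0 a b) \<and> (\<forall>t\<ge>0. \<forall>a<n1. \<forall>b<n2.
           ((\<lambda>s. V s a b) has_vector_derivative factor_rhs n1 n2 Bp \<kappa>1 \<kappa>2 (H1 t) (H2 t) (V t) a b)
             (at t within {0..}))"
proof -
  define I where "I = {..<n1} \<times> {..<n2}"
  define M where "M t x y = (if x \<in> I \<and> y \<in> I then factor_generator Bp \<kappa>1 \<kappa>2 (H1 t) (H2 t) x y else 0)"
    for t x y
  have "continuous_on {0..} (\<lambda>t. M t x y)" for x y
  proof (cases "x \<in> I \<and> y \<in> I")
    case True
    then obtain a b c d where xy: "x = (a, b)" "y = (c, d)" and "a < n1" "b < n2"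
      unfolding I_def by auto
    moreover have "continuous_on {0..} (\<lambda>t. if d = b then H1 t a c else 0)"
      using H1[OF \<open>a < n1\<close>] by (cases "d = b") auto
    moreover have "continuous_on {0..} (\<lambda>t. if c = a then H2 t b d else 0)"
      using H2[OF \<open>b < n2\<close>] by (cases "c = a") auto
    ultimately
    show ?thesis using True unfolding M_def xy factor_generator_def by (auto intro!: continuous_intros)
  next
    case False
    then have "(\<lambda>t. M t x y) = (\<lambda>t. 0)" unfolding M_def by auto
    then show ?thesis by (metis continuous_on_const)
  qed
  then obtain X where X0: "\<forall>i. X 0 i = V0 (fst i) (snd i)"
    and X: "\<forall>t\<ge>0. \<forall>i\<in>I. ((\<lambda>s. X s i) has_vector_derivative (\<Sum>k\<in>I. M t i k * X t k)) (at t within {0..})"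
    using linear_ode_exists[of I M "\<lambda>i. V0 (fst i) (snd i)"] by (auto simp: I_def)
  have "((\<lambda>s. X s (a, b)) has_vector_derivative
      factor_rhs n1 n2 Bp \<kappa>1 \<kappa>2 (H1 t) (H2 t) (\<lambda>a b. X t (a, b)) a b) (at t within {0..})"
    if "0 \<le> t" "a < n1" "b < n2" for t a b
  proof -
    have ab: "(a, b) \<in> I" using that by (simp add: I_def)
    have "(\<Sum>k\<in>I. M t (a, b) k * X t k)
        = (\<Sum>k\<in>I. factor_generator Bp \<kappa>1 \<kappa>2 (H1 t) (H2 t) (a, b) k * (\<lambda>a b. X t (a, b)) (fst k) (snd k))"
      by (rule sum.cong) (use ab in \<open>auto simp: M_def\<close>)
    also have "\<dots> = factor_rhs n1 n2 Bp \<kappa>1 \<kappa>2 (H1 t) (H2 t) (\<lambda>a b. X t (a, b)) a b"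
      unfolding I_def by (rule sum_factor_generator) (use that in auto)
    finally have eq: "(\<Sum>k\<in>I. M t (a, b) k * X t k)
        = factor_rhs n1 n2 Bp \<kappa>1 \<kappa>2 (H1 t) (H2 t) (\<lambda>a b. X t (a, b)) a b" .
    show ?thesis
      using X that(1) ab unfolding eq[symmetric] by blast
  qed
  then show ?thesis using X0 by (intro exI[of _ "\<lambda>t a b. X t (a, b)"]) auto
qed

text \<open>The multiple matrix model with its coupling read off a given family of tensors \<open>T\<close>
  rather than from the factors themselves; it is linear in \<open>V\<close>.\<close>
definition frozen_mm_solution ::
  "nat \<Rightarrow> nat \<Rightarrow> (nat \<Rightarrow> nat) \<Rightarrow> (nat \<Rightarrow> nat) \<Rightarrow> real \<Rightarrow> real
   \<Rightarrow> (nat \<Rightarrow> nat \<Rightarrow> nat \<Rightarrow> nat \<Rightarrow> nat \<Rightarrow> nat \<Rightarrow> complex)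
   \<Rightarrow> (nat \<Rightarrow> real \<Rightarrow> nat list \<Rightarrow> complex) \<Rightarrow> (nat \<Rightarrow> nat \<Rightarrow> real \<Rightarrow> cmat) \<Rightarrow> bool" where
  "frozen_mm_solution N m d1 d2 \<kappa>1 \<kappa>2 B T V \<longleftrightarrow>
    (\<forall>t\<ge>0. \<forall>j<N. \<forall>p<m. \<forall>a<d1 p. \<forall>b<d2 p.
       ((\<lambda>s. V j p s a b) has_vector_derivative
          factor_rhs (d1 p) (d2 p) (B j p) \<kappa>1 \<kappa>2 (lohe_coupling N (tdims m d1 d2) T j t (2*p))
            (lohe_coupling N (tdims m d1 d2) T j t (2*p+1)) (V j p t) a b) (at t within {0..}))"

lemma frozen_mm_solution_exists:
  assumes sol: "lohe_solution N (tdims m d1 d2) \<kappa> A T"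
  shows "\<exists>V. frozen_mm_solution N m d1 d2 \<kappa>1 \<kappa>2 B T V \<and> (\<forall>j<N. \<forall>p<m. \<forall>a b. V j p 0 a b = U0 j p a b)"
proof -
  let ?H = "lohe_coupling N (tdims m d1 d2) T"
  let ?P = "\<lambda>j p V. (\<forall>a b. V 0 a b = U0 j p a b) \<and> (\<forall>t\<ge>0. \<forall>a<d1 p. \<forall>b<d2 p.
      ((\<lambda>s. V s a b) has_vector_derivative
         factor_rhs (d1 p) (d2 p) (B j p) \<kappa>1 \<kappa>2 (?H j t (2*p)) (?H j t (2*p+1)) (V t) a b) (at t within {0..}))"
  have ex: "\<exists>V. ?P j p V" if "j < N" "p < m" for j p
    using that by (intro factor_ode_exists continuous_on_lohe_coupling[OF sol]) auto
  have "?P j p (SOME V. ?P j p V)" if "j < N" "p < m" for j p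
    by (rule someI_ex[OF ex[OF that]])
  then show ?thesis
    unfolding frozen_mm_solution_def by (intro exI[of _ "\<lambda>j p. SOME V. ?P j p V"]) auto
qed

text \<open>The product of the factors and \<open>T\<^sub>j\<close> solve the same linear equation.\<close>
lemma lohe_solution_eq_mtensor_frozen:
  assumes sol: "lohe_solution N (tdims m d1 d2) (kappa_coupling m \<kappa>1 \<kappa>2) (free_flow m B) T"
    and V: "frozen_mm_solution N m d1 d2 \<kappa>1 \<kappa>2 B T V"
    and V0: "\<And>a. a \<in> idxs (tdims m d1 d2) \<Longrightarrow> T j 0 a = mtensor m (\<lambda>p. V j p 0) a"
    and j: "j < N" and t: "0 \<le> t" and a: "a \<in> idxs (tdims m d1 d2)"
  shows "T j t a = mtensor m (\<lambda>p. V j p t) a"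
proof (rule mode_rhs_ode_unique[where H = "lohe_coupling N (tdims m d1 d2) T j"])
  fix r a c assume "a < tdims m d1 d2 ! r"
  then show "continuous_on {0..} (\<lambda>t. lohe_coupling N (tdims m d1 d2) T j t r a c)"
    by (rule continuous_on_lohe_coupling[OF sol j])
next
  fix t :: real and a assume t: "0 \<le> t" and a: "a \<in> idxs (tdims m d1 d2)"
  show "((\<lambda>s. T j s a) has_vector_derivative mode_rhs (tdims m d1 d2) \<kappa>1 \<kappa>2 (free_flow m B j)
      (lohe_coupling N (tdims m d1 d2) T j t) (T j t) a) (at t within {0..})"
    unfolding lohe_coupling_def lohe_rhs_eq_mode_rhs[OF a, symmetric]
    by (rule sol[unfolded lohe_solution_def, rule_format, OF t j a])
next
  fix t :: real and a assume t: "0 \<le> t" and a: "a \<in> idxs (tdims m d1 d2)"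
  show "((\<lambda>s. mtensor m (\<lambda>p. V j p s) a) has_vector_derivative mode_rhs (tdims m d1 d2) \<kappa>1 \<kappa>2
      (free_flow m B j) (lohe_coupling N (tdims m d1 d2) T j t) (mtensor m (\<lambda>p. V j p t)) a) (at t within {0..})"
    by (rule has_vector_derivative_mtensor_mode_rhs[OF a],
        rule V[unfolded frozen_mm_solution_def, rule_format, OF t j])
next
  fix a assume "a \<in> idxs (tdims m d1 d2)"
  then show "T j 0 a = mtensor m (\<lambda>p. V j p 0) a" by (rule V0)
qed (simp_all add: t a)

lemma mm_solution_if_frozen:
  assumes V: "frozen_mm_solution N m d1 d2 \<kappa>1 \<kappa>2 B T V"
    and T: "\<And>t k a. 0 \<le> t \<Longrightarrow> k < N \<Longrightarrow> a \<in> idxs (tdims m d1 d2) \<Longrightarrow> T k t a = mtensor m (\<lambda>p. V k p t) a"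
  shows "mm_solution N m d1 d2 \<kappa>1 \<kappa>2 B V"
  unfolding mm_solution_def
proof (intro allI impI)
  fix t :: real and j p a b
  assume t: "0 \<le> t" and j: "j < N" and p: "p < m" and "a < d1 p" "b < d2 p"
  let ?Vt = "\<lambda>j' p'. V j' p' t"
  have Tt: "T k t x = mtensor m (?Vt k) x" if "k < N" "x \<in> idxs (tdims m d1 d2)" for k x
    using T[OF t that] .
  have H: "lohe_coupling N (tdims m d1 d2) T j t r x y = mm_coupling N m d1 d2 ?Vt j r x y"
    if "r < 2*m" "x < tdims m d1 d2 ! r" "y < tdims m d1 d2 ! r" for r x y
    unfolding lohe_coupling_def
    by (rule mode_coupling_mtensor[where T = "\<lambda>k. T k t" and U = "\<lambda>j' p'. V j' p' t", OF Tt that j])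
  have row: "lohe_coupling N (tdims m d1 d2) T j t (2*p) a c = mm_coupling_row N m d1 d2 ?Vt j p a c"
    if "c < d1 p" for c
    using H[of "2*p" a c] p \<open>a < d1 p\<close> that by (simp add: mm_coupling_def)
  have col: "lohe_coupling N (tdims m d1 d2) T j t (2*p+1) b c = mm_coupling_col N m d1 d2 ?Vt j p b c"
    if "c < d2 p" for c
    using H[of "2*p+1" b c] p \<open>b < d2 p\<close> that by (simp add: mm_coupling_def)
  have row_sum: "(\<Sum>c<d1 p. lohe_coupling N (tdims m d1 d2) T j t (2*p) a c * V j p t c b)
      = (\<Sum>c<d1 p. mm_coupling_row N m d1 d2 ?Vt j p a c * V j p t c b)"
    by (intro sum.cong refl) (simp add: row)
  have col_sum: "(\<Sum>c<d2 p. lohe_coupling N (tdims m d1 d2) T j t (2*p+1) b c * V j p t a c)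
      = (\<Sum>c<d2 p. mm_coupling_col N m d1 d2 ?Vt j p b c * V j p t a c)"
    by (intro sum.cong refl) (simp add: col[simplified])
  have rhs: "mm_rhs N m d1 d2 \<kappa>1 \<kappa>2 B ?Vt j p a b
      = factor_rhs (d1 p) (d2 p) (B j p) \<kappa>1 \<kappa>2 (lohe_coupling N (tdims m d1 d2) T j t (2*p))
          (lohe_coupling N (tdims m d1 d2) T j t (2*p+1)) (V j p t) a b"
    unfolding mm_rhs_eq_factor_rhs factor_rhs_def row_sum col_sum ..
  show "((\<lambda>s. V j p s a b) has_vector_derivative mm_rhs N m d1 d2 \<kappa>1 \<kappa>2 B ?Vt j p a b) (at t within {0..})"
    unfolding rhs
    by (rule V[unfolded frozen_mm_solution_def, rule_format, OF t j p \<open>a < d1 p\<close> \<open>b < d2 p\<close>])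
qed

lemma lohe_solution_factorizes:
  assumes skew: "\<forall>j<N. \<forall>p<m. \<forall>a1<d1 p. \<forall>b1<d2 p. \<forall>a2<d1 p. \<forall>b2<d2 p.
           B j p a1 b1 a2 b2 = - cnj (B j p a2 b2 a1 b1)"
    and sol: "lohe_solution N (tdims m d1 d2) (kappa_coupling m \<kappa>1 \<kappa>2) (free_flow m B) T"
    and unit: "\<forall>i<N. \<forall>p<m. frob_norm (d1 p) (d2 p) (U0 i p) = 1"
    and T0: "\<forall>i<N. \<forall>a\<in>idxs (tdims m d1 d2). T i 0 a = mtensor m (U0 i) a"
  shows "\<exists>U. mm_solution N m d1 d2 \<kappa>1 \<kappa>2 B U
           \<and> (\<forall>i<N. \<forall>p<m. \<forall>a b. U i p 0 a b = U0 i p a b)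
           \<and> (\<forall>t\<ge>0. \<forall>i<N. \<forall>p<m. frob_norm (d1 p) (d2 p) (U i p t) = 1)
           \<and> (\<forall>t\<ge>0. \<forall>i<N. \<forall>a\<in>idxs (tdims m d1 d2). T i t a = mtensor m (\<lambda>p. U i p t) a)"
proof -
  obtain V where V: "frozen_mm_solution N m d1 d2 \<kappa>1 \<kappa>2 B T V"
    and V0: "\<forall>j<N. \<forall>p<m. \<forall>a b. V j p 0 a b = U0 j p a b"
    using frozen_mm_solution_exists[OF sol] by blast
  have TV0: "T j 0 a = mtensor m (\<lambda>p. V j p 0) a" if "j < N" "a \<in> idxs (tdims m d1 d2)" for j a
    using T0 V0 that unfolding mtensor_def by simp
  have TV: "T j t a = mtensor m (\<lambda>p. V j p t) a"
    if "0 \<le> t" "j < N" "a \<in> idxs (tdims m d1 d2)" for t j a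
    by (rule lohe_solution_eq_mtensor_frozen[OF sol V TV0]) (use that in simp_all)
  have mm: "mm_solution N m d1 d2 \<kappa>1 \<kappa>2 B V"
    by (rule mm_solution_if_frozen[OF V TV])
  have "frob_norm (d1 p) (d2 p) (V i p t) = 1" if "0 \<le> t" "i < N" "p < m" for t i p
  proof -
    have "frob_norm (d1 p) (d2 p) (V i p t) = frob_norm (d1 p) (d2 p) (V i p 0)"
      by (rule mm_solution_frob_norm_const[OF mm skew]) (use that in auto)
    also have "\<dots> = frob_norm (d1 p) (d2 p) (U0 i p)"
      using V0 that by (simp add: frob_norm_def)
    finally show ?thesis using unit that by simp
  qed
  then show ?thesis
    using mm V0 TV by (intro exI[of _ V]) simp
qed

theorem proposition5p1:
  fixes N m :: nat and d1 d2 :: "nat \<Rightarrow> nat" and \<kappa>1 \<kappa>2 :: real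
    and B :: "nat \<Rightarrow> nat \<Rightarrow> nat \<Rightarrow> nat \<Rightarrow> nat \<Rightarrow> nat \<Rightarrow> complex"
  assumes "N \<ge> 1" and "m \<ge> 1"
    and "\<forall>p<m. d1 p \<ge> 1 \<and> d2 p \<ge> 1"
    and "\<kappa>1 \<ge> 0" and "\<kappa>2 \<ge> 0"
    and "\<forall>j<N. \<forall>p<m. \<forall>a1<d1 p. \<forall>b1<d2 p. \<forall>a2<d1 p. \<forall>b2<d2 p.
           B j p a1 b1 a2 b2 = - cnj (B j p a2 b2 a1 b1)"
  shows
    "(\<forall>U. mm_solution N m d1 d2 \<kappa>1 \<kappa>2 B U \<longrightarrow>
          lohe_solution N (tdims m d1 d2) (kappa_coupling m \<kappa>1 \<kappa>2) (free_flow m B)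
            (\<lambda>i t. mtensor m (\<lambda>p. U i p t)))
     \<and>
     (\<forall>T U0. lohe_solution N (tdims m d1 d2) (kappa_coupling m \<kappa>1 \<kappa>2) (free_flow m B) T
          \<and> (\<forall>i<N. \<forall>p<m. frob_norm (d1 p) (d2 p) (U0 i p) = 1)
          \<and> (\<forall>i<N. \<forall>a\<in>idxs (tdims m d1 d2). T i 0 a = mtensor m (U0 i) a)
        \<longrightarrow> (\<exists>U. mm_solution N m d1 d2 \<kappa>1 \<kappa>2 B U
               \<and> (\<forall>i<N. \<forall>p<m. \<forall>a<d1 p. \<forall>b<d2 p. U i p 0 a b = U0 i p a b)
               \<and> (\<forall>t>0. \<forall>i<N. \<forall>p<m. frob_norm (d1 p) (d2 p) (U i p t) = 1)
               \<and> (\<forall>t>0. \<forall>i<N. \<forall>a\<in>idxs (tdims m d1 d2).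
                     T i t a = mtensor m (\<lambda>p. U i p t) a)))"
proof (intro conjI allI impI)
  fix U assume "mm_solution N m d1 d2 \<kappa>1 \<kappa>2 B U"
  then show "lohe_solution N (tdims m d1 d2) (kappa_coupling m \<kappa>1 \<kappa>2) (free_flow m B)
      (\<lambda>i t. mtensor m (\<lambda>p. U i p t))"
    by (rule lohe_solution_mtensor)
next
  fix T U0
  assume "lohe_solution N (tdims m d1 d2) (kappa_coupling m \<kappa>1 \<kappa>2) (free_flow m B) T
    \<and> (\<forall>i<N. \<forall>p<m. frob_norm (d1 p) (d2 p) (U0 i p) = 1)
    \<and> (\<forall>i<N. \<forall>a\<in>idxs (tdims m d1 d2). T i 0 a = mtensor m (U0 i) a)"
  then have sol: "lohe_solution N (tdims m d1 d2) (kappa_coupling m \<kappa>1 \<kappa>2) (free_flow m B) T"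
    and unit0: "\<forall>i<N. \<forall>p<m. frob_norm (d1 p) (d2 p) (U0 i p) = 1"
    and T0: "\<forall>i<N. \<forall>a\<in>idxs (tdims m d1 d2). T i 0 a = mtensor m (U0 i) a"
    by blast+
  obtain U where U: "mm_solution N m d1 d2 \<kappa>1 \<kappa>2 B U"
    and U0: "\<forall>i<N. \<forall>p<m. \<forall>a b. U i p 0 a b = U0 i p a b"
    and unit: "\<forall>t\<ge>0. \<forall>i<N. \<forall>p<m. frob_norm (d1 p) (d2 p) (U i p t) = 1"
    and TU: "\<forall>t\<ge>0. \<forall>i<N. \<forall>a\<in>idxs (tdims m d1 d2). T i t a = mtensor m (\<lambda>p. U i p t) a"
    using lohe_solution_factorizes[OF assms(6) sol unit0 T0] by blast
  show "\<exists>U. mm_solution N m d1 d2 \<kappa>1 \<kappa>2 B U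
      \<and> (\<forall>i<N. \<forall>p<m. \<forall>a<d1 p. \<forall>b<d2 p. U i p 0 a b = U0 i p a b)
      \<and> (\<forall>t>0. \<forall>i<N. \<forall>p<m. frob_norm (d1 p) (d2 p) (U i p t) = 1)
      \<and> (\<forall>t>0. \<forall>i<N. \<forall>a\<in>idxs (tdims m d1 d2). T i t a = mtensor m (\<lambda>p. U i p t) a)"
  proof (intro exI[of _ U] conjI)
    show "\<forall>i<N. \<forall>p<m. \<forall>a<d1 p. \<forall>b<d2 p. U i p 0 a b = U0 i p a b"
      using U0 by blast
    show "\<forall>t>0. \<forall>i<N. \<forall>p<m. frob_norm (d1 p) (d2 p) (U i p t) = 1"
      using unit by simp
    show "\<forall>t>0. \<forall>i<N. \<forall>a\<in>idxs (tdims m d1 d2). T i t a = mtensor m (\<lambda>p. U i p t) a"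
      using TU by simp
  qed (rule U)
qed

end
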